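(* Consider a GePUP-ES-RK scheme (described in the context) whose Runge–Kutta method $(A,\mathbf{b},\mathbf{c})$ is algebraically stable, and assume all stage and step quantities exist and are sufficiently smooth. Suppose the initial data satisfy $\mathbf{w}^0(\mathbf{x})=\mathbf{u}^0(\mathbf{x})$ for all $\mathbf{x}\in\partial\Omega$. Then for all $n\in\mathbb{N}$, $$\|\nabla\cdot\mathbf{w}^{n+1}\|^2-\|\nabla\cdot\mathbf{w}^n\|^2\le-2k\nu\sum_{i=1}^s b_i\|\nabla(\nabla\cdot\mathbf{w}^{(i)})\|^2,$$ and for all $n\in\mathbb{N}$ and all $\mathbf{x}\in\partial\Omega$, $$|\mathbf{n}\cdot\mathbf{w}^{n+1}(\mathbf{x})|^2-|\mathbf{n}\cdot\mathbf{w}^n(\mathbf{x})|^2\le-2k\lambda\sum_{i=1}^s b_i|\mathbf{n}\cdot\mathbf{w}^{(i)}(\mathbf{x})|^2.$$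
   Context: $\Omega\subset\mathbb{R}^D$ is a bounded connected open set with sufficiently smooth boundary, unit outward normal $\mathbf{n}$, unit tangent vector(s) $\boldsymbol{\tau}$; $\|\cdot\|$, $\langle\cdot,\cdot\rangle$ are the $L^2(\Omega)$ norm and inner product. $\nu>0$, $\lambda\ge0$, time step $k>0$. The Leray–Helmholtz projection $\mathscr{P}$ maps a $C^1$ field $\mathbf{v}^*$ to $\mathbf{v}^*-\nabla\phi$ with $\Delta\phi=\nabla\cdot\mathbf{v}^*$ in $\Omega$, $\mathbf{n}\cdot\nabla\phi=\mathbf{n}\cdot\mathbf{v}^*$ on $\partial\Omega$. $I_{cv}(\mathbf{u},\mathbf{v}):=\int_\Omega(\mathbf{u}\cdot\nabla\mathbf{u})\cdot\mathbf{v}\,\mathrm{d}V$. An $s$-stage RK method $(A=(a_{i,j}),\mathbf{b},\mathbf{c})$ is algebraically stable if $b_i\ge0$ for all $i$ and the symmetric matrix $M$ with $m_{i,j}=b_ia_{i,j}+b_ja_{j,i}-b_ib_j$ is positive semidefinite. A GePUP-ES-RK scheme: given $\mathbf{w}^n$, $r^n$, forcing approximations $\mathbf{g}^{(i)}$ and given explicit velocity approximations $\widetilde{\mathbf{u}}^{(i)}$ ($i=1,\dots,s$), the stage quantities satisfy for each $i$: $\Delta q^{(i)}=\nabla\cdot(\mathbf{g}^{(i)}-r^{(i)}\widetilde{\mathbf{u}}^{(i)}\cdot\nabla\widetilde{\mathbf{u}}^{(i)})$ in $\Omega$; $\mathbf{n}\cdot\nabla q^{(i)}=\mathbf{n}\cdot(\mathbf{g}^{(i)}-r^{(i)}\widetilde{\mathbf{u}}^{(i)}\cdot\nabla\widetilde{\mathbf{u}}^{(i)}+\nu\Delta\mathbf{w}^{(i)})+\lambda\,\mathbf{n}\cdot\mathbf{w}^{(i)}$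 on $\partial\Omega$; $\boldsymbol{\rho}^{(i)}:=\mathbf{g}^{(i)}-r^{(i)}\widetilde{\mathbf{u}}^{(i)}\cdot\nabla\widetilde{\mathbf{u}}^{(i)}-\nabla q^{(i)}+\nu\Delta\mathbf{w}^{(i)}$; $\mathbf{w}^{(i)}=\mathbf{w}^n+k\sum_{j=1}^sa_{i,j}\boldsymbol{\rho}^{(j)}$ in $\Omega$; $\mathbf{w}^{(i)}\cdot\boldsymbol{\tau}=0$, $\nabla\cdot\mathbf{w}^{(i)}=0$ on $\partial\Omega$; $r^{(i)}=r^n+k\sum_{j=1}^sa_{i,j}I_{cv}(\widetilde{\mathbf{u}}^{(j)},\mathbf{u}^{(j)})$; $\mathbf{u}^{(i)}=\mathscr{P}\mathbf{w}^{(i)}$ in $\Omega$, $\mathbf{n}\cdot\mathbf{u}^{(i)}=0$ on $\partial\Omega$; and the step update is $\mathbf{w}^{n+1}=\mathbf{w}^n+k\sum_{i=1}^sb_i\boldsymbol{\rho}^{(i)}$, $r^{n+1}=r^n+k\sum_{i=1}^sb_iI_{cv}(\widetilde{\mathbf{u}}^{(i)},\mathbf{u}^{(i)})$, $\mathbf{u}^{n+1}=\mathscr{P}\mathbf{w}^{n+1}$ in $\Omega$ with $\mathbf{n}\cdot\mathbf{u}^{n+1}=0$ on $\partial\Omega$. Also $\mathbf{u}^0=\mathscr{P}\mathbf{w}^0$. *)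

theory Defs
  imports "HOL-Analysis.Analysis"
begin

fun Ck_on :: "nat \<Rightarrow> 'a::euclidean_space set \<Rightarrow> ('a \<Rightarrow> 'b::real_normed_vector) \<Rightarrow> bool" where
  "Ck_on 0 U f = continuous_on U f"
| "Ck_on (Suc m) U f =
     (f differentiable_on U \<and> (\<forall>v. Ck_on m U (\<lambda>x. frechet_derivative f (at x) v)))"

definition Cinf_on :: "'a::euclidean_space set \<Rightarrow> ('a \<Rightarrow> 'b::real_normed_vector) \<Rightarrow> bool" where
  "Cinf_on U f \<longleftrightarrow> (\<forall>m. Ck_on m U f)"

definition smooth_up_to_bdry :: "'a::euclidean_space set \<Rightarrow> ('a \<Rightarrow> 'b::real_normed_vector) \<Rightarrow> bool" where
  "smooth_up_to_bdry \<Omega> f \<longleftrightarrow> (\<exists>V. open V \<and> closure \<Omega> \<subseteq> V \<and> Cinf_on V f)"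

definition sgrad :: "('a::euclidean_space \<Rightarrow> real) \<Rightarrow> 'a \<Rightarrow> 'a" where
  "sgrad \<phi> x = (\<Sum>e\<in>Basis. frechet_derivative \<phi> (at x) e *\<^sub>R e)"

definition vdiv :: "('a::euclidean_space \<Rightarrow> 'a) \<Rightarrow> 'a \<Rightarrow> real" where
  "vdiv f x = (\<Sum>e\<in>Basis. frechet_derivative f (at x) e \<bullet> e)"

definition slap :: "('a::euclidean_space \<Rightarrow> real) \<Rightarrow> 'a \<Rightarrow> real" where
  "slap \<phi> x = (\<Sum>e\<in>Basis. frechet_derivative (\<lambda>y. frechet_derivative \<phi> (at y) e) (at x) e)"

definition vlap :: "('a::euclidean_space \<Rightarrow> 'a) \<Rightarrow> 'a \<Rightarrow> 'a" where
  "vlap f x = (\<Sum>e\<in>Basis. slap (\<lambda>y. f y \<bullet> e) x *\<^sub>R e)"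

definition conv :: "('a::euclidean_space \<Rightarrow> 'a) \<Rightarrow> 'a \<Rightarrow> 'a" where
  "conv u x = frechet_derivative u (at x) (u x)"

definition L2sq :: "'a::euclidean_space set \<Rightarrow> ('a \<Rightarrow> 'b::real_normed_vector) \<Rightarrow> real" where
  "L2sq \<Omega> f = integral \<Omega> (\<lambda>x. (norm (f x))\<^sup>2)"

definition Icv :: "'a::euclidean_space set \<Rightarrow> ('a \<Rightarrow> 'a) \<Rightarrow> ('a \<Rightarrow> 'a) \<Rightarrow> real" where
  "Icv \<Omega> u v = integral \<Omega> (\<lambda>x. conv u x \<bullet> v x)"

definition smooth_domain :: "'a::euclidean_space set \<Rightarrow> ('a \<Rightarrow> 'a) \<Rightarrow> bool" where
  "smooth_domain \<Omega> nrm \<longleftrightarrow> open \<Omega> \<and> bounded \<Omega> \<and> connected \<Omega> \<and> \<Omega> \<noteq> {} \<and>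
     (\<forall>x\<in>frontier \<Omega>. \<exists>V \<psi>. open V \<and> x \<in> V \<and> Cinf_on V \<psi> \<and>
        (\<forall>y\<in>V. sgrad \<psi> y \<noteq> 0) \<and> \<Omega> \<inter> V = {y\<in>V. \<psi> y < 0} \<and>
        nrm x = (1 / norm (sgrad \<psi> x)) *\<^sub>R sgrad \<psi> x)"

definition leray_proj :: "'a::euclidean_space set \<Rightarrow> ('a \<Rightarrow> 'a) \<Rightarrow> ('a \<Rightarrow> 'a) \<Rightarrow> ('a \<Rightarrow> 'a) \<Rightarrow> bool" where
  "leray_proj \<Omega> nrm v u \<longleftrightarrow> (\<exists>\<phi>. smooth_up_to_bdry \<Omega> \<phi> \<and>
     (\<forall>x\<in>\<Omega>. slap \<phi> x = vdiv v x) \<and>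
     (\<forall>x\<in>frontier \<Omega>. nrm x \<bullet> sgrad \<phi> x = nrm x \<bullet> v x) \<and>
     (\<forall>x\<in>\<Omega>. u x = v x - sgrad \<phi> x))"

definition alg_stable :: "nat \<Rightarrow> (nat \<Rightarrow> nat \<Rightarrow> real) \<Rightarrow> (nat \<Rightarrow> real) \<Rightarrow> bool" where
  "alg_stable s A b \<longleftrightarrow> (\<forall>i\<in>{1..s}. 0 \<le> b i) \<and>
     (\<forall>\<xi>::nat \<Rightarrow> real. 0 \<le> (\<Sum>i=1..s. \<Sum>j=1..s. (b i * A i j + b j * A j i - b i * b j) * \<xi> i * \<xi> j))"

definition stage_rho :: "real \<Rightarrow> ('a::euclidean_space \<Rightarrow> 'a) \<Rightarrow> real \<Rightarrow> ('a \<Rightarrow> 'a) \<Rightarrow> ('a \<Rightarrow> real)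
    \<Rightarrow> ('a \<Rightarrow> 'a) \<Rightarrow> 'a \<Rightarrow> 'a" where
  "stage_rho \<nu> g r ut q w x = g x - r *\<^sub>R conv ut x - sgrad q x + \<nu> *\<^sub>R vlap w x"

end

theory Submission
  imports Defs
begin

text \<open>
  Write \<open>\<rho>(i)\<close> for the stage right-hand sides, so that \<open>w(n+1)\<close> and the stage values \<open>w(i)\<close>
  arise from \<open>w(n)\<close> by the Runge--Kutta combinations of the \<open>\<rho>(i)\<close>. Two scalar quantities
  inherit this structure. Pointwise in \<open>\<Omega>\<close>, \<open>div w\<close> has stage slopes
  \<open>div \<rho>(i) = \<nu> \<Delta> div w(i)\<close>: the pressure equation cancels forcing and convection, and
  \<open>div \<Delta> = \<Delta> div\<close> because third derivatives commute. At a boundary point, \<open>n \<cdot> w\<close> has stage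
  slopes \<open>n \<cdot> \<rho>(i) = - \<lambda> n \<cdot> w(i)\<close> by the pressure boundary condition. A scalar evolved by an
  algebraically stable method satisfies \<open>y(n+1)\<^sup>2 - y(n)\<^sup>2 \<le> 2 k \<Sum>\<^sub>i b\<^sub>i Y\<^sub>i F\<^sub>i\<close> (stage values
  \<open>Y\<^sub>i\<close>, slopes \<open>F\<^sub>i\<close>); at the boundary this is the second estimate. For the first, integrate
  over \<open>\<Omega>\<close>: since \<open>D = div w(i)\<close> vanishes on the boundary, \<open>\<integral> D \<Delta>D \<le> - \<parallel>\<nabla>D\<parallel>\<^sup>2\<close>. This Green
  inequality comes from difference quotients of the zero extension of \<open>D \<partial>\<^sub>e D\<close>, whose
  integrals vanish by translation invariance.
\<close>

definition dderiv :: "('a::euclidean_space \<Rightarrow> 'b::real_normed_vector) \<Rightarrow> 'a \<Rightarrow> 'a \<Rightarrow> 'b" where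
  "dderiv f v x = frechet_derivative f (at x) v"

lemma dderiv_eq: "(f has_derivative f') (at x) \<Longrightarrow> dderiv f v x = f' v"
  unfolding dderiv_def by (metis frechet_derivative_at)

lemma has_derivative_dderiv: "f differentiable (at x) \<Longrightarrow> (f has_derivative (\<lambda>v. dderiv f v x)) (at x)"
  unfolding dderiv_def using frechet_derivative_works by metis

lemma frechet_derivative_cong_open:
  assumes "open U" "x \<in> U" "\<And>y. y \<in> U \<Longrightarrow> f y = g y"
  shows "frechet_derivative f (at x) = frechet_derivative g (at x)"
proof -
  have "(f has_derivative D) (at x) \<longleftrightarrow> (g has_derivative D) (at x)" for D
    using has_derivative_transform_within_open[OF _ assms(1,2)] assms(3) by metis
  then show ?thesis unfolding frechet_derivative_def by simp
qed

lemma dderiv_cong_open: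
  "open U \<Longrightarrow> x \<in> U \<Longrightarrow> (\<And>y. y \<in> U \<Longrightarrow> f y = g y) \<Longrightarrow> dderiv f v x = dderiv g v x"
  unfolding dderiv_def by (metis frechet_derivative_cong_open)

lemma Ck_on_cong:
  assumes "open V" "\<And>x. x \<in> V \<Longrightarrow> f x = g x" "Ck_on m V f"
  shows "Ck_on m V g"
  using assms(2,3)
proof (induction m arbitrary: f g)
  case 0
  then show ?case using continuous_on_cong by fastforce
next
  case (Suc m)
  have "g differentiable (at x)" if "x \<in> V" for x
  proof -
    have "f differentiable (at x)"
      using Suc.prems that \<open>open V\<close> differentiable_on_eq_differentiable_at by auto
    then show ?thesis
      using has_derivative_transform_within_open[OF _ \<open>open V\<close> that] Suc.prems(1)
      unfolding differentiable_def by blast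
  qed
  then have "g differentiable_on V"
    using \<open>open V\<close> differentiable_on_eq_differentiable_at by blast
  moreover have "Ck_on m V (\<lambda>x. frechet_derivative g (at x) v)" for v
  proof (rule Suc.IH[of "\<lambda>x. frechet_derivative f (at x) v"])
    show "frechet_derivative f (at x) v = frechet_derivative g (at x) v" if "x \<in> V" for x
      using frechet_derivative_cong_open[OF \<open>open V\<close> that] Suc.prems(1) by metis
  qed (use Suc.prems in simp)
  ultimately show ?case by simp
qed

lemma Cinf_on_dderiv: "Cinf_on V f \<Longrightarrow> Cinf_on V (dderiv f v)"
  unfolding Cinf_on_def dderiv_def[abs_def] by (metis Ck_on.simps(2))

lemma Cinf_on_continuous_on: "Cinf_on V f \<Longrightarrow> continuous_on V f"
  unfolding Cinf_on_def by (metis Ck_on.simps(1))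

lemma Ck_on_SucI:
  assumes "open V" "\<And>x. x \<in> V \<Longrightarrow> (f has_derivative D x) (at x)" "\<And>v. Ck_on m V (\<lambda>x. D x v)"
  shows "Ck_on (Suc m) V f"
proof -
  have D: "D x v = frechet_derivative f (at x) v" if "x \<in> V" for x v
    using frechet_derivative_at[OF assms(2)[OF that]] by simp
  have "f differentiable_on V"
    using assms(1,2) differentiable_on_eq_differentiable_at differentiable_def by blast
  moreover have "Ck_on m V (\<lambda>x. frechet_derivative f (at x) v)" for v
    by (rule Ck_on_cong[OF assms(1) D assms(3)])
  ultimately show ?thesis by simp
qed

lemma Ck_on_differentiable: "Ck_on (Suc m) V f \<Longrightarrow> open V \<Longrightarrow> x \<in> V \<Longrightarrow> f differentiable (at x)"
  using differentiable_on_eq_differentiable_at by auto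

lemma Ck_on_linear:
  assumes "open V" "bounded_linear L" "Ck_on m V f"
  shows "Ck_on m V (\<lambda>x. L (f x))"
  using assms(3)
proof (induction m arbitrary: f)
  case 0
  then show ?case using bounded_linear.continuous_on[OF assms(2)] by simp
next
  case (Suc m)
  show ?case
  proof (rule Ck_on_SucI[OF assms(1)])
    show "((\<lambda>x. L (f x)) has_derivative (\<lambda>v. L (frechet_derivative f (at x) v))) (at x)" if "x \<in> V" for x
      using Ck_on_differentiable[OF Suc.prems assms(1) that] frechet_derivative_works
      by (blast intro: bounded_linear.has_derivative[OF assms(2)])
    show "Ck_on m V (\<lambda>x. L (frechet_derivative f (at x) v))" for v
      using Suc by simp
  qed
qed

lemma Ck_on_sum:
  assumes "open V" "finite I" "\<And>i. i \<in> I \<Longrightarrow> Ck_on m V (f i)"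
  shows "Ck_on m V (\<lambda>x. \<Sum>i\<in>I. f i x)"
  using assms(3)
proof (induction m arbitrary: f)
  case 0
  then show ?case by (auto intro: continuous_on_sum)
next
  case (Suc m)
  show ?case
  proof (rule Ck_on_SucI[OF assms(1)])
    show "((\<lambda>x. \<Sum>i\<in>I. f i x) has_derivative (\<lambda>v. \<Sum>i\<in>I. frechet_derivative (f i) (at x) v)) (at x)"
      if "x \<in> V" for x
      by (intro has_derivative_sum)
        (metis Ck_on_differentiable Suc.prems assms(1) that frechet_derivative_works)
    show "Ck_on m V (\<lambda>x. \<Sum>i\<in>I. frechet_derivative (f i) (at x) v)" for v
      using Suc by simp
  qed
qed

lemma Cinf_on_differentiable: "Cinf_on V f \<Longrightarrow> open V \<Longrightarrow> x \<in> V \<Longrightarrow> f differentiable (at x)"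
  unfolding Cinf_on_def by (blast intro: Ck_on_differentiable)

lemma Cinf_on_has_derivative:
  "Cinf_on V f \<Longrightarrow> open V \<Longrightarrow> x \<in> V \<Longrightarrow> (f has_derivative (\<lambda>v. dderiv f v x)) (at x)"
  by (rule has_derivative_dderiv[OF Cinf_on_differentiable])

lemma Cinf_on_linear: "open V \<Longrightarrow> bounded_linear L \<Longrightarrow> Cinf_on V f \<Longrightarrow> Cinf_on V (\<lambda>x. L (f x))"
  unfolding Cinf_on_def using Ck_on_linear by blast

lemma Cinf_on_sum:
  "open V \<Longrightarrow> finite I \<Longrightarrow> (\<And>i. i \<in> I \<Longrightarrow> Cinf_on V (f i)) \<Longrightarrow> Cinf_on V (\<lambda>x. \<Sum>i\<in>I. f i x)"
  unfolding Cinf_on_def using Ck_on_sum by blast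

section \<open>Symmetry of second derivatives\<close>

lemma has_real_derivative_along_line:
  fixes f :: "'a::real_normed_vector \<Rightarrow> real"
  assumes "(f has_derivative f') (at (p + t *\<^sub>R v))"
  shows "((\<lambda>t. f (p + t *\<^sub>R v)) has_real_derivative f' v) (at t)"
proof -
  have line: "((\<lambda>t. p + t *\<^sub>R v) has_derivative (\<lambda>h. h *\<^sub>R v)) (at t)"
    by (auto intro!: derivative_eq_intros)
  have "(\<lambda>h. f' (h *\<^sub>R v)) = (*) (f' v)"
    using linear_cmul[OF has_derivative_linear[OF assms]] by (auto simp: fun_eq_iff)
  then show ?thesis
    using has_derivative_compose[OF line assms] unfolding has_field_derivative_def by simp
qed

lemma second_difference_mean_value:
  fixes g :: "'a::real_normed_vector \<Rightarrow> real"
  assumes d1: "\<And>y. y \<in> V \<Longrightarrow> (g has_derivative g' y) (at y)"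
    and d2: "\<And>y. y \<in> V \<Longrightarrow> ((\<lambda>z. g' z a) has_derivative g'' y) (at y)"
    and box: "\<And>t r. t \<in> {0..s} \<Longrightarrow> r \<in> {0..s} \<Longrightarrow> x + r *\<^sub>R b + t *\<^sub>R a \<in> V"
    and "s > 0"
  obtains t r where "t \<in> {0<..<s}" "r \<in> {0<..<s}"
    "g (x + s *\<^sub>R b + s *\<^sub>R a) - g (x + s *\<^sub>R a) - g (x + s *\<^sub>R b) + g x
       = s\<^sup>2 * g'' (x + r *\<^sub>R b + t *\<^sub>R a) b"
proof -
  define \<psi> where "\<psi> t = g (x + s *\<^sub>R b + t *\<^sub>R a) - g (x + 0 *\<^sub>R b + t *\<^sub>R a)" for t
  have d\<psi>: "DERIV \<psi> t :> g' (x + s *\<^sub>R b + t *\<^sub>R a) a - g' (x + 0 *\<^sub>R b + t *\<^sub>R a) a"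
    if "0 \<le> t" "t \<le> s" for t
    unfolding \<psi>_def
    by (intro DERIV_diff has_real_derivative_along_line[OF d1[OF box]]) (use that in auto)
  obtain t where t: "0 < t" "t < s"
    and \<psi>: "\<psi> s - \<psi> 0 = s * (g' (x + s *\<^sub>R b + t *\<^sub>R a) a - g' (x + 0 *\<^sub>R b + t *\<^sub>R a) a)"
    using MVT2[OF \<open>s > 0\<close> d\<psi>] by auto
  have d\<chi>: "DERIV (\<lambda>r. g' (x + t *\<^sub>R a + r *\<^sub>R b) a) r :> g'' (x + t *\<^sub>R a + r *\<^sub>R b) b"
    if "0 \<le> r" "r \<le> s" for r
  proof -
    have "x + t *\<^sub>R a + r *\<^sub>R b \<in> V"
      using box[of t r] that t by (simp add: add_ac)
    then show ?thesis by (rule has_real_derivative_along_line[OF d2])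
  qed
  obtain r where r: "0 < r" "r < s"
    and \<chi>: "g' (x + t *\<^sub>R a + s *\<^sub>R b) a - g' (x + t *\<^sub>R a + 0 *\<^sub>R b) a
           = s * g'' (x + t *\<^sub>R a + r *\<^sub>R b) b"
    using MVT2[OF \<open>s > 0\<close> d\<chi>] by auto
  have "\<psi> s - \<psi> 0 = s\<^sup>2 * g'' (x + r *\<^sub>R b + t *\<^sub>R a) b"
    using \<psi> \<chi> by (simp add: add_ac power2_eq_square)
  then show ?thesis
    using that[of t r] t r unfolding \<psi>_def by (simp add: algebra_simps)
qed

text \<open>The second difference is symmetric in \<open>a\<close> and \<open>b\<close>; applying the mean value theorem to
  it in both orders yields equal mixed derivatives at two points near \<open>x\<close>.\<close>

lemma mixed_derivatives_agree_nearby: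
  fixes g :: "'a::real_normed_vector \<Rightarrow> real"
  assumes d1: "\<And>y. y \<in> V \<Longrightarrow> (g has_derivative g' y) (at y)"
    and da: "\<And>y. y \<in> V \<Longrightarrow> ((\<lambda>z. g' z a) has_derivative ga y) (at y)"
    and db: "\<And>y. y \<in> V \<Longrightarrow> ((\<lambda>z. g' z b) has_derivative gb y) (at y)"
    and "ball x r \<subseteq> V" "0 < r"
  obtains p p' where "dist p x < r" "dist p' x < r" "ga p b = gb p' a"
proof -
  define c where "c = norm a + norm b + 1"
  have "c > 0" unfolding c_def by (simp add: add_nonneg_pos)
  define s where "s = r / c"
  have "s > 0" unfolding s_def using \<open>0 < r\<close> \<open>c > 0\<close> by simp
  have near: "dist (x + \<rho> *\<^sub>R u + t *\<^sub>R v) x < r"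
    if "t \<in> {0..s}" "\<rho> \<in> {0..s}" "norm u + norm v < c" for t \<rho> u v
  proof -
    have "dist (x + \<rho> *\<^sub>R u + t *\<^sub>R v) x \<le> \<rho> * norm u + t * norm v"
      using that(1,2) norm_triangle_ineq[of "\<rho> *\<^sub>R u" "t *\<^sub>R v"] by (simp add: dist_norm)
    also have "\<dots> \<le> s * (norm u + norm v)"
      using that(1,2) by (simp add: distrib_left add_mono mult_right_mono)
    also have "\<dots> < s * c" using that(3) \<open>s > 0\<close> by simp
    finally show ?thesis unfolding s_def using \<open>c > 0\<close> by simp
  qed
  then have box: "x + \<rho> *\<^sub>R u + t *\<^sub>R v \<in> V"
    if "t \<in> {0..s}" "\<rho> \<in> {0..s}" "norm u + norm v < c" for t \<rho> u v
    using that assms(4) by (auto simp: dist_commute)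
  have ab: "norm a + norm b < c" "norm b + norm a < c" unfolding c_def by auto
  obtain t \<rho> where t\<rho>: "t \<in> {0<..<s}" "\<rho> \<in> {0<..<s}"
    and \<Delta>1: "g (x + s *\<^sub>R b + s *\<^sub>R a) - g (x + s *\<^sub>R a) - g (x + s *\<^sub>R b) + g x
       = s\<^sup>2 * ga (x + \<rho> *\<^sub>R b + t *\<^sub>R a) b"
    using second_difference_mean_value[OF d1 da box[OF _ _ ab(2)] \<open>s > 0\<close>] by blast
  obtain t' \<rho>' where t\<rho>': "t' \<in> {0<..<s}" "\<rho>' \<in> {0<..<s}"
    and \<Delta>2: "g (x + s *\<^sub>R a + s *\<^sub>R b) - g (x + s *\<^sub>R b) - g (x + s *\<^sub>R a) + g x
       = s\<^sup>2 * gb (x + \<rho>' *\<^sub>R a + t' *\<^sub>R b) a"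
    using second_difference_mean_value[OF d1 db box[OF _ _ ab(1)] \<open>s > 0\<close>] by blast
  have "s\<^sup>2 * ga (x + \<rho> *\<^sub>R b + t *\<^sub>R a) b = s\<^sup>2 * gb (x + \<rho>' *\<^sub>R a + t' *\<^sub>R b) a"
    using \<Delta>1 \<Delta>2 by (simp only: add_ac diff_diff_eq)
  then have "ga (x + \<rho> *\<^sub>R b + t *\<^sub>R a) b = gb (x + \<rho>' *\<^sub>R a + t' *\<^sub>R b) a"
    using \<open>s > 0\<close> by simp
  moreover have "dist (x + \<rho> *\<^sub>R b + t *\<^sub>R a) x < r" "dist (x + \<rho>' *\<^sub>R a + t' *\<^sub>R b) x < r"
    using near[of t \<rho> b a] near[of t' \<rho>' a b] t\<rho> t\<rho>' ab by auto
  ultimately show ?thesis using that by blast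
qed

lemma second_derivative_symmetric:
  fixes g :: "'a::real_normed_vector \<Rightarrow> real"
  assumes "open V" "x \<in> V"
    and d1: "\<And>y. y \<in> V \<Longrightarrow> (g has_derivative g' y) (at y)"
    and da: "\<And>y. y \<in> V \<Longrightarrow> ((\<lambda>z. g' z a) has_derivative ga y) (at y)"
    and db: "\<And>y. y \<in> V \<Longrightarrow> ((\<lambda>z. g' z b) has_derivative gb y) (at y)"
    and ca: "isCont (\<lambda>y. ga y b) x" and cb: "isCont (\<lambda>y. gb y a) x"
  shows "ga x b = gb x a"
proof -
  obtain \<delta> where "\<delta> > 0" and \<delta>: "ball x \<delta> \<subseteq> V"
    using assms(1,2) open_contains_ball by blast
  have "\<delta> / Suc n \<le> \<delta>" "0 < \<delta> / Suc n" for n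
    using \<open>\<delta> > 0\<close> by (simp_all add: divide_le_eq del: of_nat_Suc)
  then have "ball x (\<delta> / Suc n) \<subseteq> V" "0 < \<delta> / Suc n" for n
    using \<delta> subset_ball by blast+
  then have "\<exists>p p'. dist p x < \<delta> / Suc n \<and> dist p' x < \<delta> / Suc n \<and> ga p b = gb p' a" for n
    by (metis mixed_derivatives_agree_nearby[OF d1 da db])
  then obtain P P' where PP': "\<And>n. dist (P n) x < \<delta> / Suc n" "\<And>n. dist (P' n) x < \<delta> / Suc n"
    and eq: "\<And>n. ga (P n) b = gb (P' n) a"
    by metis
  have lim0: "(\<lambda>n. \<delta> / Suc n) \<longlonglongrightarrow> 0"
    using LIMSEQ_Suc[OF lim_const_over_n[of \<delta>]] by simp
  have "Q \<longlonglongrightarrow> x" if "\<And>n. dist (Q n) x < \<delta> / Suc n" for Q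
    by (rule tendsto_dist_iff[THEN iffD2], rule tendsto_sandwich[OF _ _ tendsto_const lim0])
      (use that in \<open>auto intro!: always_eventually less_imp_le simp del: of_nat_Suc\<close>)
  then have "(\<lambda>n. ga (P n) b) \<longlonglongrightarrow> ga x b" "(\<lambda>n. gb (P' n) a) \<longlonglongrightarrow> gb x a"
    using PP' by (auto intro: isCont_tendsto_compose[OF ca] isCont_tendsto_compose[OF cb])
  then show ?thesis unfolding eq by (rule LIMSEQ_unique)
qed

lemma Cinf_on_dderiv_commute:
  fixes g :: "'a::euclidean_space \<Rightarrow> real"
  assumes "Cinf_on V g" "open V" "x \<in> V"
  shows "dderiv (dderiv g a) b x = dderiv (dderiv g b) a x"
proof -
  have deriv: "(dderiv g u has_derivative (\<lambda>v. dderiv (dderiv g u) v y)) (at y)" if "y \<in> V" for u y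
    using Cinf_on_has_derivative[OF Cinf_on_dderiv[OF assms(1)] assms(2) that] .
  have cont: "isCont (dderiv (dderiv g u) v) x" for u v
    using Cinf_on_continuous_on[OF Cinf_on_dderiv[OF Cinf_on_dderiv[OF assms(1)]]] assms(2,3)
    by (simp add: continuous_on_eq_continuous_at)
  show ?thesis
    by (rule second_derivative_symmetric[OF assms(2,3), where g' = "\<lambda>y v. dderiv g v y"
          and ga = "\<lambda>y v. dderiv (dderiv g a) v y" and gb = "\<lambda>y v. dderiv (dderiv g b) v y"])
      (use Cinf_on_has_derivative[OF assms(1,2)] deriv cont in auto)
qed

lemma dderiv_sum:
  assumes "finite I" "\<And>i. i \<in> I \<Longrightarrow> f i differentiable (at x)"
  shows "dderiv (\<lambda>y. \<Sum>i\<in>I. f i y) v x = (\<Sum>i\<in>I. dderiv (f i) v x)"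
proof -
  have "((\<lambda>y. \<Sum>i\<in>I. f i y) has_derivative (\<lambda>v. \<Sum>i\<in>I. dderiv (f i) v x)) (at x)"
    using assms(2) by (intro has_derivative_sum has_derivative_dderiv)
  then show ?thesis by (rule dderiv_eq)
qed

lemma dderiv_linear:
  assumes "bounded_linear L" "f differentiable (at x)"
  shows "dderiv (\<lambda>y. L (f y)) v x = L (dderiv f v x)"
  using bounded_linear.has_derivative[OF assms(1) has_derivative_dderiv[OF assms(2)]]
  by (rule dderiv_eq)

lemma vdiv_dderiv: "vdiv f = (\<lambda>x. \<Sum>e\<in>Basis. dderiv f e x \<bullet> e)"
  unfolding vdiv_def dderiv_def by simp

lemma sgrad_dderiv: "sgrad \<phi> = (\<lambda>x. \<Sum>e\<in>Basis. dderiv \<phi> e x *\<^sub>R e)"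
  unfolding sgrad_def dderiv_def by simp

lemma slap_dderiv: "slap \<phi> = (\<lambda>x. \<Sum>e\<in>Basis. dderiv (dderiv \<phi> e) e x)"
  unfolding slap_def dderiv_def[abs_def] by simp

lemma vdiv_has_derivative: "(f has_derivative f') (at x) \<Longrightarrow> vdiv f x = (\<Sum>e\<in>Basis. f' e \<bullet> e)"
  unfolding vdiv_dderiv by (simp add: dderiv_eq)

lemma vdiv_add:
  "f differentiable (at x) \<Longrightarrow> g differentiable (at x) \<Longrightarrow> vdiv (\<lambda>y. f y + g y) x = vdiv f x + vdiv g x"
  using vdiv_has_derivative[OF has_derivative_add[OF has_derivative_dderiv has_derivative_dderiv]]
  by (simp add: vdiv_dderiv inner_add_left sum.distrib)

lemma vdiv_diff:
  "f differentiable (at x) \<Longrightarrow> g differentiable (at x) \<Longrightarrow> vdiv (\<lambda>y. f y - g y) x = vdiv f x - vdiv g x"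
  using vdiv_has_derivative[OF has_derivative_diff[OF has_derivative_dderiv has_derivative_dderiv]]
  by (simp add: vdiv_dderiv inner_diff_left sum_subtractf)

lemma vdiv_scaleR: "f differentiable (at x) \<Longrightarrow> vdiv (\<lambda>y. c *\<^sub>R f y) x = c * vdiv f x"
  using vdiv_has_derivative[OF has_derivative_scaleR_right[OF has_derivative_dderiv]]
  by (simp add: vdiv_dderiv sum_distrib_left)

lemma vdiv_sum:
  assumes "finite I" "\<And>i. i \<in> I \<Longrightarrow> f i differentiable (at x)"
  shows "vdiv (\<lambda>y. \<Sum>i\<in>I. f i y) x = (\<Sum>i\<in>I. vdiv (f i) x)"
  using vdiv_has_derivative[OF has_derivative_sum[OF has_derivative_dderiv[OF assms(2)]]]
  by (simp add: vdiv_dderiv inner_sum_left sum.swap[where A = I])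

lemma vdiv_cong_open:
  "open U \<Longrightarrow> x \<in> U \<Longrightarrow> (\<And>y. y \<in> U \<Longrightarrow> f y = g y) \<Longrightarrow> vdiv f x = vdiv g x"
  unfolding vdiv_def by (metis frechet_derivative_cong_open)

lemma vdiv_linear_combination:
  assumes "f differentiable (at x)" "\<And>i. i \<in> I \<Longrightarrow> h i differentiable (at x)" "finite I"
  shows "vdiv (\<lambda>y. f y + k *\<^sub>R (\<Sum>i\<in>I. c i *\<^sub>R h i y)) x = vdiv f x + k * (\<Sum>i\<in>I. c i * vdiv (h i) x)"
proof -
  have "(\<lambda>y. \<Sum>i\<in>I. c i *\<^sub>R h i y) differentiable (at x)"
    using assms(2,3) by simp
  then show ?thesis
    using assms by (simp add: vdiv_add vdiv_scaleR vdiv_sum)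
qed

lemma Cinf_on_component: "open V \<Longrightarrow> Cinf_on V f \<Longrightarrow> Cinf_on V (\<lambda>x. f x \<bullet> c)"
  by (rule Cinf_on_linear[OF _ bounded_linear_inner_left])

lemma Cinf_on_vdiv: "open V \<Longrightarrow> Cinf_on V f \<Longrightarrow> Cinf_on V (vdiv f)"
  unfolding vdiv_dderiv by (intro Cinf_on_sum Cinf_on_component Cinf_on_dderiv finite_Basis)

lemma Cinf_on_slap: "open V \<Longrightarrow> Cinf_on V \<phi> \<Longrightarrow> Cinf_on V (slap \<phi>)"
  unfolding slap_dderiv by (intro Cinf_on_sum Cinf_on_dderiv finite_Basis)

lemma Cinf_on_sgrad: "open V \<Longrightarrow> Cinf_on V \<phi> \<Longrightarrow> Cinf_on V (sgrad \<phi>)"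
  unfolding sgrad_dderiv
  by (intro Cinf_on_sum Cinf_on_linear[OF _ bounded_linear_scaleR_left] Cinf_on_dderiv finite_Basis)

lemma Cinf_on_vlap: "open V \<Longrightarrow> Cinf_on V f \<Longrightarrow> Cinf_on V (vlap f)"
  unfolding vlap_def[abs_def]
  by (intro Cinf_on_sum Cinf_on_linear[OF _ bounded_linear_scaleR_left] Cinf_on_slap
      Cinf_on_component finite_Basis)

lemma inner_sum_Basis_scaleR:
  fixes c :: "'a::euclidean_space \<Rightarrow> real"
  shows "e \<in> Basis \<Longrightarrow> (\<Sum>b\<in>Basis. c b *\<^sub>R b) \<bullet> e = c e"
  by (simp add: inner_sum_left inner_Basis if_distrib cong: if_cong)

lemma norm_sum_Basis_scaleR_sq:
  fixes c :: "'a::euclidean_space \<Rightarrow> real"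
  shows "(norm (\<Sum>b\<in>Basis. c b *\<^sub>R b))\<^sup>2 = (\<Sum>b\<in>Basis. (c b)\<^sup>2)"
  unfolding power2_norm_eq_inner
  by (subst euclidean_inner) (simp add: inner_sum_Basis_scaleR power2_eq_square)

lemma vdiv_sgrad:
  assumes "Cinf_on V \<phi>" "open V" "x \<in> V"
  shows "vdiv (sgrad \<phi>) x = slap \<phi> x"
proof -
  have "dderiv (sgrad \<phi>) e x = (\<Sum>b\<in>Basis. dderiv (dderiv \<phi> b) e x *\<^sub>R b)" for e
    unfolding sgrad_dderiv using Cinf_on_differentiable[OF Cinf_on_dderiv[OF assms(1)] assms(2,3)]
    by (simp add: dderiv_sum dderiv_linear[OF bounded_linear_scaleR_left])
  then show ?thesis
    by (simp add: vdiv_dderiv slap_dderiv inner_sum_Basis_scaleR)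
qed

lemma slap_cong_open:
  assumes "open U" "x \<in> U" "\<And>y. y \<in> U \<Longrightarrow> f y = g y"
  shows "slap f x = slap g x"
proof -
  have "dderiv (dderiv f b) b x = dderiv (dderiv g b) b x" for b
    by (rule dderiv_cong_open[OF assms(1,2)], rule dderiv_cong_open[OF assms(1) _ assms(3)])
  then show ?thesis
    unfolding slap_dderiv by simp
qed

lemma slap_sum:
  assumes "open V" "x \<in> V" "finite I" "\<And>i. i \<in> I \<Longrightarrow> Cinf_on V (f i)"
  shows "slap (\<lambda>y. \<Sum>i\<in>I. f i y) x = (\<Sum>i\<in>I. slap (f i) x)"
proof -
  have "dderiv (dderiv (\<lambda>y. \<Sum>i\<in>I. f i y) b) b x = (\<Sum>i\<in>I. dderiv (dderiv (f i) b) b x)" for b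
  proof -
    have "dderiv (dderiv (\<lambda>y. \<Sum>i\<in>I. f i y) b) b x = dderiv (\<lambda>y. \<Sum>i\<in>I. dderiv (f i) b y) b x"
      by (rule dderiv_cong_open[OF assms(1,2)]) (use assms in \<open>intro dderiv_sum Cinf_on_differentiable\<close>)
    also have "\<dots> = (\<Sum>i\<in>I. dderiv (dderiv (f i) b) b x)"
      using assms by (intro dderiv_sum Cinf_on_differentiable Cinf_on_dderiv)
    finally show ?thesis .
  qed
  then show ?thesis
    unfolding slap_dderiv by (simp add: sum.swap[where B = I])
qed

lemma dderiv_slap:
  fixes \<psi> :: "'a::euclidean_space \<Rightarrow> real"
  assumes "Cinf_on V \<psi>" "open V" "x \<in> V"
  shows "dderiv (slap \<psi>) e x = slap (dderiv \<psi> e) x"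
proof -
  have "dderiv (dderiv (dderiv \<psi> b) b) e x = dderiv (dderiv (dderiv \<psi> e) b) b x" for b
  proof -
    have "dderiv (dderiv (dderiv \<psi> b) b) e x = dderiv (dderiv (dderiv \<psi> b) e) b x"
      using Cinf_on_dderiv_commute[OF Cinf_on_dderiv[OF assms(1)] assms(2,3)] .
    also have "\<dots> = dderiv (dderiv (dderiv \<psi> e) b) b x"
      using Cinf_on_dderiv_commute[OF assms(1,2)] by (rule dderiv_cong_open[OF assms(2,3)])
    finally show ?thesis .
  qed
  moreover have "dderiv (slap \<psi>) e x = (\<Sum>b\<in>Basis. dderiv (dderiv (dderiv \<psi> b) b) e x)"
    unfolding slap_dderiv using assms
    by (intro dderiv_sum Cinf_on_differentiable Cinf_on_dderiv finite_Basis)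
  ultimately show ?thesis
    unfolding slap_dderiv[of "dderiv \<psi> e"] by simp
qed

lemma vdiv_vlap:
  assumes "Cinf_on V f" "open V" "x \<in> V"
  shows "vdiv (vlap f) x = slap (vdiv f) x"
proof -
  define \<phi> where "\<phi> e y = f y \<bullet> e" for e y
  have \<phi>: "Cinf_on V (\<phi> e)" for e
    unfolding \<phi>_def[abs_def] by (rule Cinf_on_component[OF assms(2,1)])
  have "(vlap f has_derivative (\<lambda>v. \<Sum>b\<in>Basis. dderiv (slap (\<phi> b)) v x *\<^sub>R b)) (at x)"
    unfolding vlap_def[abs_def] \<phi>_def[symmetric]
    by (intro has_derivative_sum has_derivative_scaleR_left has_derivative_dderiv
        Cinf_on_differentiable[OF Cinf_on_slap[OF assms(2) \<phi>] assms(2,3)])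
  then have "vdiv (vlap f) x = (\<Sum>e\<in>Basis. dderiv (slap (\<phi> e)) e x)"
    by (simp add: vdiv_has_derivative inner_sum_Basis_scaleR)
  also have "\<dots> = (\<Sum>e\<in>Basis. slap (dderiv (\<phi> e) e) x)"
    using dderiv_slap[OF \<phi> assms(2,3)] by simp
  also have "\<dots> = slap (\<lambda>y. \<Sum>e\<in>Basis. dderiv (\<phi> e) e y) x"
    using assms(2,3) \<phi> by (intro slap_sum[symmetric] Cinf_on_dderiv finite_Basis)
  also have "\<dots> = slap (vdiv f) x"
  proof (rule slap_cong_open[OF assms(2,3)])
    show "(\<Sum>e\<in>Basis. dderiv (\<phi> e) e y) = vdiv f y" if "y \<in> V" for y
      unfolding vdiv_dderiv \<phi>_def using Cinf_on_differentiable[OF assms(1,2) that]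
      by (simp add: dderiv_linear[OF bounded_linear_inner_left])
  qed
  finally show ?thesis .
qed

lemma conv_differentiable:
  assumes "Cinf_on V u" "open V" "x \<in> V"
  shows "conv u differentiable (at x)"
proof -
  have conv_eq: "(\<Sum>e\<in>Basis. (u y \<bullet> e) *\<^sub>R dderiv u e y) = conv u y" if "y \<in> V" for y
  proof -
    have lin: "linear (\<lambda>v. dderiv u v y)"
      using has_derivative_linear[OF Cinf_on_has_derivative[OF assms(1,2) that]] .
    have "(\<Sum>e\<in>Basis. (u y \<bullet> e) *\<^sub>R dderiv u e y) = dderiv u (\<Sum>e\<in>Basis. (u y \<bullet> e) *\<^sub>R e) y"
      using linear_sum[OF lin, of "\<lambda>e. (u y \<bullet> e) *\<^sub>R e" Basis] linear_cmul[OF lin]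
      by (simp add: o_def)
    also have "\<dots> = conv u y"
      unfolding conv_def dderiv_def by (simp add: euclidean_representation)
    finally show ?thesis .
  qed
  have "(\<lambda>y. \<Sum>e\<in>Basis. (u y \<bullet> e) *\<^sub>R dderiv u e y) differentiable (at x)"
    using Cinf_on_differentiable[OF assms(1,2,3)]
      Cinf_on_differentiable[OF Cinf_on_dderiv[OF assms(1)] assms(2,3)]
    by simp
  then obtain D where "((\<lambda>y. \<Sum>e\<in>Basis. (u y \<bullet> e) *\<^sub>R dderiv u e y) has_derivative D) (at x)"
    unfolding differentiable_def by blast
  then have "(conv u has_derivative D) (at x)"
    by (rule has_derivative_transform_within_open[OF _ assms(2,3) conv_eq])
  then show ?thesis unfolding differentiable_def by blast
qed

lemma smooth_up_to_bdryE:
  assumes "smooth_up_to_bdry \<Omega> f"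
  obtains V where "open V" "closure \<Omega> \<subseteq> V" "Cinf_on V f"
  using assms unfolding smooth_up_to_bdry_def by blast

lemma smooth_up_to_bdry_differentiable:
  "smooth_up_to_bdry \<Omega> f \<Longrightarrow> x \<in> closure \<Omega> \<Longrightarrow> f differentiable (at x)"
  by (metis smooth_up_to_bdryE Cinf_on_differentiable subsetD)

lemma smooth_up_to_bdry_continuous_on: "smooth_up_to_bdry \<Omega> f \<Longrightarrow> continuous_on (closure \<Omega>) f"
  by (metis smooth_up_to_bdryE Cinf_on_continuous_on continuous_on_subset)

lemma smooth_up_to_bdry_conv_differentiable:
  "smooth_up_to_bdry \<Omega> u \<Longrightarrow> x \<in> closure \<Omega> \<Longrightarrow> conv u differentiable (at x)"
  by (metis smooth_up_to_bdryE conv_differentiable subsetD)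

lemma smooth_up_to_bdry_operators:
  shows smooth_up_to_bdry_sgrad: "smooth_up_to_bdry \<Omega> \<phi> \<Longrightarrow> smooth_up_to_bdry \<Omega> (sgrad \<phi>)"
    and smooth_up_to_bdry_slap: "smooth_up_to_bdry \<Omega> \<phi> \<Longrightarrow> smooth_up_to_bdry \<Omega> (slap \<phi>)"
    and smooth_up_to_bdry_vdiv: "smooth_up_to_bdry \<Omega> f \<Longrightarrow> smooth_up_to_bdry \<Omega> (vdiv f)"
    and smooth_up_to_bdry_vlap: "smooth_up_to_bdry \<Omega> f \<Longrightarrow> smooth_up_to_bdry \<Omega> (vlap f)"
  unfolding smooth_up_to_bdry_def
  by (metis Cinf_on_sgrad, metis Cinf_on_slap, metis Cinf_on_vdiv, metis Cinf_on_vlap)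

lemma continuous_on_closure_eq:
  fixes f g :: "'a::topological_space \<Rightarrow> 'b::real_normed_vector"
  assumes "continuous_on (closure S) f" "continuous_on (closure S) g" "\<And>y. y \<in> S \<Longrightarrow> f y = g y"
    and "x \<in> closure S"
  shows "f x = g x"
proof -
  have "closed (closure S \<inter> (\<lambda>y. f y - g y) -` {0})"
    using assms(1,2) by (intro continuous_closed_preimage continuous_intros) auto
  moreover have "S \<subseteq> closure S \<inter> (\<lambda>y. f y - g y) -` {0}"
    using assms(3) closure_subset by auto
  ultimately have "closure S \<subseteq> (\<lambda>y. f y - g y) -` {0}"
    using closure_minimal by blast
  then show ?thesis using assms(4) by auto
qed

section \<open>A Green inequality\<close>

lemma absolutely_integrable_on_bounded_open:
  fixes f :: "'a::euclidean_space \<Rightarrow> 'b::euclidean_space"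
  assumes "open \<Omega>" "bounded \<Omega>" "continuous_on (closure \<Omega>) f"
  shows "f absolutely_integrable_on \<Omega>"
proof -
  have lm: "\<Omega> \<in> lmeasurable"
    using lmeasurable_interior[OF assms(2)] interior_open[OF assms(1)] by simp
  then have "\<Omega> \<in> sets lebesgue" by (simp add: fmeasurableD)
  moreover obtain B where "\<And>y. y \<in> closure \<Omega> \<Longrightarrow> norm (f y) \<le> B"
    using continuous_on_compact_bound[OF _ assms(3)] assms(2) compact_closure by metis
  ultimately show ?thesis
    using continuous_imp_measurable_on_sets_lebesgue[OF continuous_on_subset[OF assms(3) closure_subset]]
      integrable_on_const[OF lm] closure_subset
    by (intro measurable_bounded_by_integrable_imp_absolutely_integrable[where g = "\<lambda>_. B"]) blast+
qed

lemma integrable_on_bounded_open: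
  fixes f :: "'a::euclidean_space \<Rightarrow> real"
  shows "open \<Omega> \<Longrightarrow> bounded \<Omega> \<Longrightarrow> continuous_on (closure \<Omega>) f \<Longrightarrow> f integrable_on \<Omega>"
  using absolutely_integrable_on_bounded_open set_lebesgue_integral_eq_integral(1) by blast

lemma absolutely_integrable_translate:
  fixes f :: "'a::euclidean_space \<Rightarrow> 'b::euclidean_space"
  assumes "f absolutely_integrable_on UNIV" "\<And>x. x \<notin> cbox a b \<Longrightarrow> f x = 0"
  shows "(\<lambda>x. f (x + c)) absolutely_integrable_on UNIV"
    and "integral UNIV (\<lambda>x. f (x + c)) = integral UNIV f"
proof -
  have shift: "((\<lambda>x. g (x + c)) has_integral i) UNIV"
    if "(g has_integral i) UNIV" "\<And>x. x \<notin> cbox a b \<Longrightarrow> g x = 0" for g :: "'a \<Rightarrow> 'c::euclidean_space" and i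
  proof -
    have "(\<lambda>x. if x \<in> cbox a b then g x else 0) = g"
      using that(2) by auto
    then have "(g has_integral i) (cbox a b)"
      using that(1) has_integral_restrict_UNIV[of "cbox a b" g i] by simp
    then have "((\<lambda>x. g (x + c)) has_integral i) (cbox (a - c) (b - c))"
      by (rule has_integral_shift_cbox)
    moreover have "g (x + c) = 0" if "x \<notin> cbox (a - c) (b - c)" for x
      using that \<open>\<And>x. x \<notin> cbox a b \<Longrightarrow> g x = 0\<close>[of "x + c"] by (auto simp: mem_box algebra_simps)
    ultimately show ?thesis by (rule has_integral_on_superset) auto
  qed
  have "((\<lambda>x. f (x + c)) has_integral integral UNIV f) UNIV"
    using assms by (intro shift) (auto simp: absolutely_integrable_on_def)
  moreover have "((\<lambda>x. norm (f (x + c))) has_integral integral UNIV (\<lambda>x. norm (f x))) UNIV"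
    using assms by (intro shift[of "\<lambda>x. norm (f x)"]) (auto simp: absolutely_integrable_on_def)
  ultimately show "(\<lambda>x. f (x + c)) absolutely_integrable_on UNIV"
    and "integral UNIV (\<lambda>x. f (x + c)) = integral UNIV f"
    unfolding absolutely_integrable_on_def by blast+
qed

lemma abs_diff_along_line_le:
  fixes \<phi> :: "'a::real_normed_vector \<Rightarrow> real"
  assumes "\<alpha> \<le> \<beta>"
    and d: "\<And>\<tau>. \<tau> \<in> {\<alpha>..\<beta>} \<Longrightarrow> (\<phi> has_derivative \<phi>' (x + \<tau> *\<^sub>R e)) (at (x + \<tau> *\<^sub>R e))"
    and L: "\<And>\<tau>. \<tau> \<in> {\<alpha>..\<beta>} \<Longrightarrow> \<bar>\<phi>' (x + \<tau> *\<^sub>R e) e\<bar> \<le> L"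
  shows "\<bar>\<phi> (x + \<beta> *\<^sub>R e) - \<phi> (x + \<alpha> *\<^sub>R e)\<bar> \<le> L * (\<beta> - \<alpha>)"
proof (cases "\<alpha> = \<beta>")
  case False
  then have "\<alpha> < \<beta>" using assms(1) by simp
  moreover have "DERIV (\<lambda>\<tau>. \<phi> (x + \<tau> *\<^sub>R e)) \<tau> :> \<phi>' (x + \<tau> *\<^sub>R e) e" if "\<alpha> \<le> \<tau>" "\<tau> \<le> \<beta>" for \<tau>
    using d that by (intro has_real_derivative_along_line) auto
  ultimately have "\<exists>\<xi>>\<alpha>. \<xi> < \<beta> \<and> \<phi> (x + \<beta> *\<^sub>R e) - \<phi> (x + \<alpha> *\<^sub>R e) = (\<beta> - \<alpha>) * \<phi>' (x + \<xi> *\<^sub>R e) e"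
    by (rule MVT2)
  then obtain \<xi> where "\<alpha> < \<xi>" "\<xi> < \<beta>"
    and "\<phi> (x + \<beta> *\<^sub>R e) - \<phi> (x + \<alpha> *\<^sub>R e) = (\<beta> - \<alpha>) * \<phi>' (x + \<xi> *\<^sub>R e) e"
    by blast
  then show ?thesis
    using L[of \<xi>] assms(1) by (simp add: abs_mult mult.commute mult_left_mono)
qed simp

lemma zero_extension_first_exit:
  fixes \<phi> :: "'a::real_normed_vector \<Rightarrow> real"
  assumes "open \<Omega>"
    and d: "\<And>y. y \<in> closure \<Omega> \<Longrightarrow> (\<phi> has_derivative \<phi>' y) (at y)"
    and L: "\<And>y. y \<in> closure \<Omega> \<Longrightarrow> \<bar>\<phi>' y e\<bar> \<le> L"
    and zero: "\<And>y. y \<in> frontier \<Omega> \<Longrightarrow> \<phi> y = 0"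
    and "0 \<le> t" "x + t *\<^sub>R e \<notin> \<Omega>"
  obtains \<tau> where "0 \<le> \<tau>" "\<tau> \<le> t" "x + \<tau> *\<^sub>R e \<notin> \<Omega>"
    "\<And>\<sigma>. 0 \<le> \<sigma> \<Longrightarrow> \<sigma> < \<tau> \<Longrightarrow> x + \<sigma> *\<^sub>R e \<in> \<Omega>"
    "\<bar>if x \<in> \<Omega> then \<phi> x else 0\<bar> \<le> L * \<tau>"
proof (cases "x \<in> \<Omega>")
  case False
  then show ?thesis using that[of 0] assms(5) by simp
next
  case True
  define S where "S = {0..t} \<inter> (\<lambda>\<sigma>. x + \<sigma> *\<^sub>R e) -` (- \<Omega>)"
  have line: "continuous_on A (\<lambda>\<sigma>. x + \<sigma> *\<^sub>R e)" for A by (intro continuous_intros)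
  have "closed S"
    unfolding S_def by (rule continuous_closed_preimage[OF line]) (use assms(1) in auto)
  moreover have "S \<noteq> {}" "bdd_below S"
    using assms(5,6) unfolding S_def by auto
  define \<tau> where "\<tau> = Inf S"
  have "\<tau> \<in> S"
    unfolding \<tau>_def by (rule closed_contains_Inf[OF \<open>S \<noteq> {}\<close> \<open>bdd_below S\<close> \<open>closed S\<close>])
  then have \<tau>: "0 \<le> \<tau>" "\<tau> \<le> t" "x + \<tau> *\<^sub>R e \<notin> \<Omega>" unfolding S_def by auto
  have inside: "x + \<sigma> *\<^sub>R e \<in> \<Omega>" if "0 \<le> \<sigma>" "\<sigma> < \<tau>" for \<sigma>
  proof (rule ccontr)
    assume "x + \<sigma> *\<^sub>R e \<notin> \<Omega>"
    then have "\<sigma> \<in> S" using that \<tau>(2) unfolding S_def by auto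
    then show False using cInf_lower[OF _ \<open>bdd_below S\<close>] that(2) unfolding \<tau>_def by fastforce
  qed
  have "0 < \<tau>" using \<tau> True by (cases "\<tau> = 0") auto
  have "(\<lambda>\<sigma>. x + \<sigma> *\<^sub>R e) ` closure {0..<\<tau>} \<subseteq> closure \<Omega>"
    using inside by (intro image_closure_subset[OF line]) (auto intro: closure_subset[THEN subsetD])
  then have seg: "x + \<sigma> *\<^sub>R e \<in> closure \<Omega>" if "\<sigma> \<in> {0..\<tau>}" for \<sigma>
    using that closure_atLeastLessThan[OF \<open>0 < \<tau>\<close>] by (auto simp: image_subset_iff)
  have "x + \<tau> *\<^sub>R e \<in> frontier \<Omega>"
    using seg[of \<tau>] \<tau> \<open>0 < \<tau>\<close> interior_open[OF assms(1)] unfolding frontier_def by auto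
  then have "\<phi> (x + \<tau> *\<^sub>R e) = 0" by (rule zero)
  moreover have "\<bar>\<phi> (x + \<tau> *\<^sub>R e) - \<phi> (x + 0 *\<^sub>R e)\<bar> \<le> L * (\<tau> - 0)"
    using seg \<open>0 < \<tau>\<close> by (intro abs_diff_along_line_le[where \<phi>' = \<phi>'] d L) auto
  ultimately show ?thesis
    using that[OF \<tau> inside] True by simp
qed

lemma zero_extension_lipschitz_along_line:
  fixes \<phi> :: "'a::real_normed_vector \<Rightarrow> real"
  assumes "open \<Omega>"
    and d: "\<And>y. y \<in> closure \<Omega> \<Longrightarrow> (\<phi> has_derivative \<phi>' y) (at y)"
    and L: "\<And>y. y \<in> closure \<Omega> \<Longrightarrow> \<bar>\<phi>' y e\<bar> \<le> L"
    and zero: "\<And>y. y \<in> frontier \<Omega> \<Longrightarrow> \<phi> y = 0"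
    and "0 \<le> L" "0 \<le> t"
  shows "\<bar>(if x + t *\<^sub>R e \<in> \<Omega> then \<phi> (x + t *\<^sub>R e) else 0) - (if x \<in> \<Omega> then \<phi> x else 0)\<bar> \<le> L * t"
proof (cases "\<forall>\<sigma>\<in>{0..t}. x + \<sigma> *\<^sub>R e \<in> \<Omega>")
  case True
  then have "\<bar>\<phi> (x + t *\<^sub>R e) - \<phi> (x + 0 *\<^sub>R e)\<bar> \<le> L * (t - 0)"
    using assms(6) by (intro abs_diff_along_line_le[where \<phi>' = \<phi>'] d L)
      (auto intro: closure_subset[THEN subsetD])
  moreover have "x \<in> \<Omega>" "x + t *\<^sub>R e \<in> \<Omega>"
    using True[rule_format, of 0] True[rule_format, of t] assms(6) by auto
  ultimately show ?thesis by simp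
next
  case False
  \<comment> \<open>Bound each end by the distance to its first exit from \<open>\<Omega>\<close> along the segment, walking
    forward from \<open>x\<close> and backward from \<open>x + t e\<close>; the two walks do not overlap.\<close>
  then obtain \<sigma>0 where "0 \<le> \<sigma>0" "\<sigma>0 \<le> t" "x + \<sigma>0 *\<^sub>R e \<notin> \<Omega>" by auto
  have L': "\<bar>\<phi>' y (- e)\<bar> \<le> L" if "y \<in> closure \<Omega>" for y
    using L[OF that] linear_neg[OF has_derivative_linear[OF d[OF that]]] by simp
  have reverse: "x + t *\<^sub>R e + \<sigma> *\<^sub>R - e = x + (t - \<sigma>) *\<^sub>R e" for \<sigma>
    by (simp add: algebra_simps)
  obtain \<tau> where "0 \<le> \<tau>" "\<tau> \<le> \<sigma>0" "x + \<tau> *\<^sub>R e \<notin> \<Omega>"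
    and inside: "\<And>\<sigma>. 0 \<le> \<sigma> \<Longrightarrow> \<sigma> < \<tau> \<Longrightarrow> x + \<sigma> *\<^sub>R e \<in> \<Omega>"
    and \<tau>: "\<bar>if x \<in> \<Omega> then \<phi> x else 0\<bar> \<le> L * \<tau>"
    by (rule zero_extension_first_exit[OF assms(1) d L zero \<open>0 \<le> \<sigma>0\<close> \<open>x + \<sigma>0 *\<^sub>R e \<notin> \<Omega>\<close>])
      (assumption | rule that)+
  have "0 \<le> t - \<sigma>0" using \<open>\<sigma>0 \<le> t\<close> by simp
  have exit: "x + t *\<^sub>R e + (t - \<sigma>0) *\<^sub>R - e \<notin> \<Omega>"
    unfolding reverse using \<open>x + \<sigma>0 *\<^sub>R e \<notin> \<Omega>\<close> by simp
  obtain \<sigma> where "0 \<le> \<sigma>" "\<sigma> \<le> t - \<sigma>0" "x + t *\<^sub>R e + \<sigma> *\<^sub>R - e \<notin> \<Omega>"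
    "\<And>\<rho>. 0 \<le> \<rho> \<Longrightarrow> \<rho> < \<sigma> \<Longrightarrow> x + t *\<^sub>R e + \<rho> *\<^sub>R - e \<in> \<Omega>"
    and \<sigma>: "\<bar>if x + t *\<^sub>R e \<in> \<Omega> then \<phi> (x + t *\<^sub>R e) else 0\<bar> \<le> L * \<sigma>"
    by (rule zero_extension_first_exit[OF assms(1) d L' zero \<open>0 \<le> t - \<sigma>0\<close> exit])
      (assumption | rule that)+
  have "\<tau> \<le> t - \<sigma>"
  proof (rule ccontr)
    assume "\<not> \<tau> \<le> t - \<sigma>"
    then have "x + (t - \<sigma>) *\<^sub>R e \<in> \<Omega>"
      using \<open>\<sigma> \<le> t - \<sigma>0\<close> \<open>0 \<le> \<sigma>0\<close> by (intro inside) auto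
    then show False using \<open>x + t *\<^sub>R e + \<sigma> *\<^sub>R - e \<notin> \<Omega>\<close> unfolding reverse by simp
  qed
  then have "L * \<sigma> + L * \<tau> \<le> L * t"
    using mult_left_mono[OF \<open>\<tau> \<le> t - \<sigma>\<close> assms(5)] by (simp add: algebra_simps)
  then show ?thesis using \<sigma> \<tau> by linarith
qed

lemma difference_quotient_along_line_tendsto:
  fixes \<phi> :: "'a::real_normed_vector \<Rightarrow> real"
  assumes "(\<phi> has_derivative \<phi>') (at y)" "t \<longlonglongrightarrow> 0" "\<And>m. t m \<noteq> 0"
  shows "(\<lambda>m. (\<phi> (y + t m *\<^sub>R e) - \<phi> y) / t m) \<longlonglongrightarrow> \<phi>' e"
proof -
  have "((\<lambda>s. \<phi> (y + s *\<^sub>R e)) has_real_derivative \<phi>' e) (at 0)"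
    using has_real_derivative_along_line[of \<phi> \<phi>' y 0 e] assms(1) by simp
  then have "((\<lambda>s. (\<phi> (y + s *\<^sub>R e) - \<phi> y) / s) \<longlongrightarrow> \<phi>' e) (at 0)"
    unfolding has_field_derivative_iff by simp
  then show ?thesis
    using assms(2,3) by (auto simp: tendsto_at_iff_sequentially o_def)
qed

lemma difference_quotient_integral_eq_0:
  fixes h :: "'a::euclidean_space \<Rightarrow> real"
  assumes "h absolutely_integrable_on UNIV" "\<And>y. y \<notin> cbox a b \<Longrightarrow> h y = 0"
  shows "(\<lambda>y. (h (y + c) - h y) / t) absolutely_integrable_on UNIV"
    and "integral UNIV (\<lambda>y. (h (y + c) - h y) / t) = 0"
proof -
  note shift = absolutely_integrable_translate[OF assms, where c = c]
  have q_eq: "(\<lambda>y. (h (y + c) - h y) / t) = (\<lambda>y. (1 / t) *\<^sub>R (h (y + c) - h y))"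
    by (simp add: fun_eq_iff divide_inverse mult.commute)
  show "(\<lambda>y. (h (y + c) - h y) / t) absolutely_integrable_on UNIV"
    unfolding q_eq by (intro absolutely_integrable_scaleR_left set_integral_diff(1) shift(1) assms(1))
  show "integral UNIV (\<lambda>y. (h (y + c) - h y) / t) = 0"
    unfolding q_eq integral_scaleR_right
    using integral_diff[OF set_lebesgue_integral_eq_integral(1)[OF shift(1)]
        set_lebesgue_integral_eq_integral(1)[OF assms(1)]] shift(2)
    by simp
qed

lemma integral_min_difference_quotient_nonpos:
  fixes h G :: "'a::euclidean_space \<Rightarrow> real"
  assumes "h absolutely_integrable_on UNIV" "\<And>y. y \<notin> cbox a b \<Longrightarrow> h y = 0"
    and "G absolutely_integrable_on UNIV"
  shows "(\<lambda>y. min ((h (y + c) - h y) / t) (G y)) absolutely_integrable_on UNIV"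
    and "integral UNIV (\<lambda>y. min ((h (y + c) - h y) / t) (G y)) \<le> 0"
proof -
  have quotient: "(\<lambda>y. (h (y + c) - h y) / t) absolutely_integrable_on UNIV"
    "integral UNIV (\<lambda>y. (h (y + c) - h y) / t) = 0"
    by (intro difference_quotient_integral_eq_0[OF assms(1)] assms(2), assumption)+
  show int: "(\<lambda>y. min ((h (y + c) - h y) / t) (G y)) absolutely_integrable_on UNIV"
    by (rule absolutely_integrable_min_1[OF quotient(1) assms(3)])
  have "integral UNIV (\<lambda>y. min ((h (y + c) - h y) / t) (G y))
      \<le> integral UNIV (\<lambda>y. (h (y + c) - h y) / t)"
    using int quotient(1) by (intro integral_le) (auto simp: set_lebesgue_integral_eq_integral(1))
  then show "integral UNIV (\<lambda>y. min ((h (y + c) - h y) / t) (G y)) \<le> 0"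
    using quotient(2) by linarith
qed

lemma bounded_translates_outside_cbox:
  fixes \<Omega> :: "'a::euclidean_space set"
  assumes "bounded \<Omega>"
  obtains a where "\<And>y s. y \<notin> cbox (- a) a \<Longrightarrow> \<bar>s\<bar> \<le> 1 \<Longrightarrow> y + s *\<^sub>R e \<notin> \<Omega>"
proof -
  obtain R where R: "\<Omega> \<subseteq> ball 0 R" using bounded_subset_ballD[OF assms] by blast
  obtain a where a: "ball (0::'a) (R + norm e) \<subseteq> cbox (- a) a"
    using bounded_subset_cbox_symmetric[OF bounded_ball] by blast
  have "y + s *\<^sub>R e \<notin> \<Omega>" if "y \<notin> cbox (- a) a" "\<bar>s\<bar> \<le> 1" for y s
  proof -
    have "y \<notin> ball 0 (R + norm e)" using that(1) a by blast
    moreover have "norm (s *\<^sub>R e) \<le> norm e" using that(2) by (simp add: mult_left_le_one_le)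
    moreover have "norm y - norm (s *\<^sub>R e) \<le> norm (y + s *\<^sub>R e)"
      using norm_triangle_ineq2[of y "- (s *\<^sub>R e)"] by simp
    ultimately have "norm (y + s *\<^sub>R e) \<ge> R" by simp
    then show ?thesis using R by auto
  qed
  then show ?thesis by (rule that)
qed

lemma zero_extension_quotient_min_tendsto:
  fixes \<phi> :: "'a::real_normed_vector \<Rightarrow> real"
  assumes "open \<Omega>"
    and d: "\<And>y. y \<in> closure \<Omega> \<Longrightarrow> (\<phi> has_derivative \<phi>' y) (at y)"
    and zero: "\<And>y. y \<in> frontier \<Omega> \<Longrightarrow> \<phi> y = 0"
    and outflow: "\<And>y. y \<in> frontier \<Omega> \<Longrightarrow> 0 \<le> \<phi>' y e"
    and t: "t \<longlonglongrightarrow> 0" "\<And>m. 0 < t m"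
  defines "h \<equiv> \<lambda>y. if y \<in> \<Omega> then \<phi> y else 0" and "G \<equiv> \<lambda>y. if y \<in> \<Omega> then \<phi>' y e else 0"
  shows "(\<lambda>m. min ((h (y + t m *\<^sub>R e) - h y) / t m) (G y)) \<longlonglongrightarrow> G y"
proof -
  have line: "(\<lambda>m. y + t m *\<^sub>R e) \<longlonglongrightarrow> y"
    using tendsto_add[OF tendsto_const tendsto_scaleR[OF t(1) tendsto_const]] by simp
  have quotient: "(\<lambda>m. (\<phi> (y + t m *\<^sub>R e) - \<phi> y) / t m) \<longlonglongrightarrow> \<phi>' y e" if "y \<in> closure \<Omega>"
    using difference_quotient_along_line_tendsto[OF d[OF that] t(1)] t(2) by (simp add: less_le)
  consider "y \<in> \<Omega>" | "y \<notin> closure \<Omega>" | "y \<in> frontier \<Omega>"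
    using interior_open[OF assms(1)] unfolding frontier_def by auto
  then show ?thesis
  proof cases
    case 1
    then have "\<forall>\<^sub>F m in sequentially. y + t m *\<^sub>R e \<in> \<Omega>"
      using topological_tendstoD[OF line assms(1)] by blast
    then have ev: "\<forall>\<^sub>F m in sequentially.
        (\<phi> (y + t m *\<^sub>R e) - \<phi> y) / t m = (h (y + t m *\<^sub>R e) - h y) / t m"
      by (rule eventually_mono) (use 1 in \<open>simp add: h_def\<close>)
    have "y \<in> closure \<Omega>" using 1 closure_subset by blast
    then have "(\<lambda>m. (h (y + t m *\<^sub>R e) - h y) / t m) \<longlonglongrightarrow> \<phi>' y e"
      by (rule Lim_transform_eventually[OF quotient ev])
    then have "(\<lambda>m. (h (y + t m *\<^sub>R e) - h y) / t m) \<longlonglongrightarrow> G y"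
      using 1 unfolding G_def by simp
    then show ?thesis using tendsto_min[OF _ tendsto_const[of "G y"]] by fastforce
  next
    case 2
    then have "\<forall>\<^sub>F m in sequentially. y + t m *\<^sub>R e \<in> - closure \<Omega>"
      using topological_tendstoD[OF line, of "- closure \<Omega>"] by auto
    then have "\<forall>\<^sub>F m in sequentially. 0 = min ((h (y + t m *\<^sub>R e) - h y) / t m) (G y)"
      by eventually_elim (use 2 closure_subset in \<open>auto simp: h_def G_def\<close>)
    then show ?thesis
      using 2 closure_subset by (auto simp: G_def intro: Lim_transform_eventually)
  next
    case 3
    then have "y \<notin> \<Omega>" "y \<in> closure \<Omega>" "\<phi> y = 0"
      using zero interior_open[OF assms(1)] unfolding frontier_def by auto
    have "(\<lambda>m. min ((\<phi> (y + t m *\<^sub>R e) - \<phi> y) / t m) 0) \<longlonglongrightarrow> min (\<phi>' y e) 0"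
      by (intro tendsto_min quotient \<open>y \<in> closure \<Omega>\<close> tendsto_const)
    then have lower: "(\<lambda>m. min ((\<phi> (y + t m *\<^sub>R e) - \<phi> y) / t m) 0) \<longlonglongrightarrow> 0"
      using outflow[OF 3] by simp
    have G0: "G y = 0" using \<open>y \<notin> \<Omega>\<close> by (simp add: G_def)
    have lo: "min ((\<phi> (y + t m *\<^sub>R e) - \<phi> y) / t m) 0 \<le> min ((h (y + t m *\<^sub>R e) - h y) / t m) 0"
      and hi: "min ((h (y + t m *\<^sub>R e) - h y) / t m) 0 \<le> 0" for m
      using \<open>y \<notin> \<Omega>\<close> \<open>\<phi> y = 0\<close> by (auto simp: h_def)
    show ?thesis
      unfolding G0 by (intro tendsto_sandwich[OF _ _ lower tendsto_const] always_eventually allI lo hi)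
  qed
qed

lemma zero_extension_quotient_min_bound:
  fixes \<phi> :: "'a::real_normed_vector \<Rightarrow> real"
  assumes "open \<Omega>"
    and d: "\<And>y. y \<in> closure \<Omega> \<Longrightarrow> (\<phi> has_derivative \<phi>' y) (at y)"
    and L: "\<And>y. y \<in> closure \<Omega> \<Longrightarrow> \<bar>\<phi>' y e\<bar> \<le> L"
    and zero: "\<And>y. y \<in> frontier \<Omega> \<Longrightarrow> \<phi> y = 0"
    and "0 \<le> L" "0 < t"
  defines "h \<equiv> \<lambda>y. if y \<in> \<Omega> then \<phi> y else 0" and "G \<equiv> \<lambda>y. if y \<in> \<Omega> then \<phi>' y e else 0"
  shows "\<bar>min ((h (y + t *\<^sub>R e) - h y) / t) (G y)\<bar> \<le> L"
proof -
  have "\<bar>h (y + t *\<^sub>R e) - h y\<bar> \<le> L * t"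
    unfolding h_def using assms(5,6)
    by (intro zero_extension_lipschitz_along_line[OF assms(1) d L zero]) auto
  then have "\<bar>(h (y + t *\<^sub>R e) - h y) / t\<bar> \<le> L" using \<open>0 < t\<close> by (simp add: abs_div divide_le_eq)
  moreover have "\<bar>G y\<bar> \<le> L" unfolding G_def using L \<open>0 \<le> L\<close> closure_subset by auto
  ultimately show ?thesis by (simp add: min_def)
qed

lemma integral_directional_derivative_nonpos:
  fixes \<phi> :: "'a::euclidean_space \<Rightarrow> real"
  assumes \<Omega>: "open \<Omega>" "bounded \<Omega>"
    and d: "\<And>y. y \<in> closure \<Omega> \<Longrightarrow> (\<phi> has_derivative \<phi>' y) (at y)"
    and cont: "continuous_on (closure \<Omega>) (\<lambda>y. \<phi>' y e)"
    and zero: "\<And>y. y \<in> frontier \<Omega> \<Longrightarrow> \<phi> y = 0"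
    and outflow: "\<And>y. y \<in> frontier \<Omega> \<Longrightarrow> 0 \<le> \<phi>' y e"
  shows "integral \<Omega> (\<lambda>y. \<phi>' y e) \<le> 0"
proof -
  obtain L where "0 \<le> L" and L: "\<And>y. y \<in> closure \<Omega> \<Longrightarrow> \<bar>\<phi>' y e\<bar> \<le> L"
    using continuous_on_compact_bound[OF _ cont] \<Omega>(2) compact_closure by (metis real_norm_def)
  obtain a where outside: "\<And>y s. y \<notin> cbox (- a) a \<Longrightarrow> \<bar>s\<bar> \<le> 1 \<Longrightarrow> y + s *\<^sub>R e \<notin> \<Omega>"
    using bounded_translates_outside_cbox[OF \<Omega>(2)] by blast
  define h where "h y = (if y \<in> \<Omega> then \<phi> y else 0)" for y
  define G where "G y = (if y \<in> \<Omega> then \<phi>' y e else 0)" for y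
  define t where "t m = 1 / real (Suc m)" for m
  \<comment> \<open>The quotients of \<open>h\<close> have integral 0; taking the minimum with \<open>G\<close> makes them converge to
    \<open>G\<close> even on the frontier (which need not be a null set), using the sign of \<open>\<phi>'\<close> there.\<close>
  define p where "p m y = min ((h (y + t m *\<^sub>R e) - h y) / t m) (G y)" for m y
  have t: "0 < t m" "t m \<le> 1" for m unfolding t_def by simp_all
  have "t \<longlonglongrightarrow> 0" unfolding t_def by (rule LIMSEQ_Suc[OF lim_const_over_n])
  have "continuous_on (closure \<Omega>) \<phi>"
    using d has_derivative_continuous continuous_at_imp_continuous_on by blast
  then have h_int: "h absolutely_integrable_on UNIV"
    unfolding h_def[abs_def] absolutely_integrable_restrict_UNIV
    by (rule absolutely_integrable_on_bounded_open[OF \<Omega>])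
  have G_int: "G absolutely_integrable_on UNIV"
    unfolding G_def[abs_def] absolutely_integrable_restrict_UNIV
    by (rule absolutely_integrable_on_bounded_open[OF \<Omega> cont])
  have h_zero: "h y = 0" if "y \<notin> cbox (- a) a" for y using outside[OF that, of 0] unfolding h_def by simp
  have p_int: "p m absolutely_integrable_on UNIV" and "integral UNIV (p m) \<le> 0" for m
    unfolding p_def[abs_def]
    by (intro integral_min_difference_quotient_nonpos[OF h_int _ G_int] h_zero, assumption)+
  moreover have "(\<lambda>m. integral UNIV (p m)) \<longlonglongrightarrow> integral UNIV G"
  proof (rule dominated_convergence(2))
    show "p m integrable_on UNIV" for m using p_int set_lebesgue_integral_eq_integral(1) by blast
    show "(\<lambda>y. if y \<in> cbox (- a) a then L else 0) integrable_on UNIV"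
      unfolding integrable_restrict_UNIV by (rule integrable_const)
    show "norm (p m y) \<le> (if y \<in> cbox (- a) a then L else 0)" for m y
    proof (cases "y \<in> cbox (- a) a")
      case False
      then show ?thesis using outside[OF False, of 0] outside[OF False, of "t m"] t[of m]
        by (simp add: p_def h_def G_def)
    next
      case True
      then show ?thesis
        unfolding p_def h_def G_def
        using zero_extension_quotient_min_bound[OF \<Omega>(1) d L zero \<open>0 \<le> L\<close> t(1)] by simp
    qed
    show "(\<lambda>m. p m y) \<longlonglongrightarrow> G y" for y
      unfolding p_def h_def G_def using t(1)
      by (intro zero_extension_quotient_min_tendsto[OF \<Omega>(1) d zero outflow \<open>t \<longlonglongrightarrow> 0\<close>, unfolded]) auto
  qed
  ultimately have "integral UNIV G \<le> 0" by (intro LIMSEQ_le_const2) auto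
  then show ?thesis unfolding G_def[abs_def] integral_restrict_UNIV .
qed

lemma integral_grad_sq_plus_laplacian_nonpos:
  fixes D :: "'a::euclidean_space \<Rightarrow> real"
  assumes \<Omega>: "open \<Omega>" "bounded \<Omega>" and "smooth_up_to_bdry \<Omega> D"
    and zero: "\<And>y. y \<in> frontier \<Omega> \<Longrightarrow> D y = 0"
  shows "integral \<Omega> (\<lambda>y. (norm (sgrad D y))\<^sup>2 + D y * slap D y) \<le> 0"
proof -
  obtain V where V: "open V" "closure \<Omega> \<subseteq> V" and D: "Cinf_on V D"
    using assms(3) by (rule smooth_up_to_bdryE)
  have cont: "continuous_on (closure \<Omega>) f" if "Cinf_on V f" for f :: "'a \<Rightarrow> real"
    using Cinf_on_continuous_on[OF that] V(2) by (rule continuous_on_subset)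
  define F where "F e y = (dderiv D e y)\<^sup>2 + D y * dderiv (dderiv D e) e y" for e y
  have F_int: "F e integrable_on \<Omega>" for e
    unfolding F_def using D
    by (intro integrable_on_bounded_open[OF \<Omega>] continuous_intros cont Cinf_on_dderiv)
  have "integral \<Omega> (F e) \<le> 0" for e
  proof -
    define \<phi>' where "\<phi>' y v = D y * dderiv (dderiv D e) v y + dderiv D v y * dderiv D e y" for y v
    have F_eq: "F e = (\<lambda>y. \<phi>' y e)" unfolding \<phi>'_def F_def by (simp add: fun_eq_iff power2_eq_square)
    have "integral \<Omega> (\<lambda>y. \<phi>' y e) \<le> 0"
    proof (rule integral_directional_derivative_nonpos[OF \<Omega>])
      show "((\<lambda>y. D y * dderiv D e y) has_derivative \<phi>' y) (at y)" if "y \<in> closure \<Omega>" for y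
        unfolding \<phi>'_def using that V(2)
        by (intro has_derivative_mult Cinf_on_has_derivative[OF D V(1)]
            Cinf_on_has_derivative[OF Cinf_on_dderiv[OF D] V(1)]) auto
      show "continuous_on (closure \<Omega>) (\<lambda>y. \<phi>' y e)"
        unfolding F_eq[symmetric] F_def using D by (intro continuous_intros cont Cinf_on_dderiv)
      show "D y * dderiv D e y = 0" "0 \<le> \<phi>' y e" if "y \<in> frontier \<Omega>" for y
        unfolding \<phi>'_def using zero[OF that] by simp_all
    qed
    then show ?thesis unfolding F_eq .
  qed
  moreover have "(norm (sgrad D y))\<^sup>2 + D y * slap D y = (\<Sum>e\<in>Basis. F e y)" for y
    by (simp add: F_def sgrad_dderiv slap_dderiv norm_sum_Basis_scaleR_sq sum.distrib sum_distrib_left)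
  ultimately show ?thesis
    using F_int by (simp add: integral_sum sum_nonpos)
qed

lemma integrable_times_slap:
  fixes D :: "'a::euclidean_space \<Rightarrow> real"
  shows "open \<Omega> \<Longrightarrow> bounded \<Omega> \<Longrightarrow> smooth_up_to_bdry \<Omega> D \<Longrightarrow> (\<lambda>y. D y * slap D y) integrable_on \<Omega>"
  by (intro integrable_on_bounded_open continuous_intros smooth_up_to_bdry_continuous_on
      smooth_up_to_bdry_slap)

lemma integral_times_slap_le:
  fixes D :: "'a::euclidean_space \<Rightarrow> real"
  assumes \<Omega>: "open \<Omega>" "bounded \<Omega>" and D: "smooth_up_to_bdry \<Omega> D"
    and zero: "\<And>y. y \<in> frontier \<Omega> \<Longrightarrow> D y = 0"
  shows "integral \<Omega> (\<lambda>y. D y * slap D y) \<le> - L2sq \<Omega> (sgrad D)"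
proof -
  have "(\<lambda>y. (norm (sgrad D y))\<^sup>2) integrable_on \<Omega>"
    using D by (intro integrable_on_bounded_open[OF \<Omega>] continuous_intros
        smooth_up_to_bdry_continuous_on smooth_up_to_bdry_sgrad)
  then have "L2sq \<Omega> (sgrad D) + integral \<Omega> (\<lambda>y. D y * slap D y)
      = integral \<Omega> (\<lambda>y. (norm (sgrad D y))\<^sup>2 + D y * slap D y)"
    unfolding L2sq_def using integrable_times_slap[OF \<Omega> D] by (rule integral_add[symmetric])
  also have "\<dots> \<le> 0" by (rule integral_grad_sq_plus_laplacian_nonpos[OF \<Omega> D zero])
  finally show ?thesis by simp
qed

section \<open>Algebraic stability\<close>

lemma rk_square_increment_eq:
  fixes y0 y1 k :: real and F Y :: "nat \<Rightarrow> real"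
  assumes y1: "y1 = y0 + k * (\<Sum>i=1..s. b i * F i)"
    and Y: "\<And>i. i \<in> {1..s} \<Longrightarrow> Y i = y0 + k * (\<Sum>j=1..s. A i j * F j)"
  shows "y1\<^sup>2 - y0\<^sup>2 = 2 * k * (\<Sum>i=1..s. b i * Y i * F i)
           - k\<^sup>2 * (\<Sum>i=1..s. \<Sum>j=1..s. (b i * A i j + b j * A j i - b i * b j) * F i * F j)"
proof -
  define S where "S = (\<Sum>i=1..s. b i * F i)"
  define P where "P = (\<Sum>i=1..s. \<Sum>j=1..s. b i * A i j * F i * F j)"
  have "(\<Sum>i=1..s. b i * Y i * F i)
      = (\<Sum>i=1..s. y0 * (b i * F i) + k * (\<Sum>j=1..s. b i * A i j * F i * F j))"
    using Y by (intro sum.cong) (simp_all add: algebra_simps sum_distrib_left sum_distrib_right)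
  then have YF: "(\<Sum>i=1..s. b i * Y i * F i) = y0 * S + k * P"
    unfolding S_def P_def by (simp add: sum.distrib sum_distrib_left)
  have "(\<Sum>i=1..s. \<Sum>j=1..s. b j * A j i * F i * F j) = P"
    unfolding P_def by (subst sum.swap) (simp add: algebra_simps)
  moreover have "(\<Sum>i=1..s. \<Sum>j=1..s. b i * b j * F i * F j) = S\<^sup>2"
    unfolding S_def power2_eq_square sum_product by (simp add: algebra_simps)
  moreover have "(b i * A i j + b j * A j i - b i * b j) * F i * F j
      = b i * A i j * F i * F j + b j * A j i * F i * F j - b i * b j * F i * F j" for i j
    by (simp add: algebra_simps)
  ultimately have M:
    "(\<Sum>i=1..s. \<Sum>j=1..s. (b i * A i j + b j * A j i - b i * b j) * F i * F j) = 2 * P - S\<^sup>2"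
    unfolding P_def by (simp only: sum.distrib sum_subtractf)
  have "y1 = y0 + k * S" using y1 S_def by simp
  then show ?thesis
    unfolding YF M by (simp add: algebra_simps power2_eq_square)
qed

lemma alg_stable_square_increment_le:
  fixes y0 y1 k :: real and F Y :: "nat \<Rightarrow> real"
  assumes "alg_stable s A b"
    and "y1 = y0 + k * (\<Sum>i=1..s. b i * F i)"
    and "\<And>i. i \<in> {1..s} \<Longrightarrow> Y i = y0 + k * (\<Sum>j=1..s. A i j * F j)"
  shows "y1\<^sup>2 - y0\<^sup>2 \<le> 2 * k * (\<Sum>i=1..s. b i * Y i * F i)"
proof -
  have "0 \<le> (\<Sum>i=1..s. \<Sum>j=1..s. (b i * A i j + b j * A j i - b i * b j) * F i * F j)"
    using assms(1) unfolding alg_stable_def by blast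
  then show ?thesis
    using rk_square_increment_eq[OF assms(2,3)] by simp
qed

locale gepup_step =
  fixes \<Omega> :: "'a::euclidean_space set" and nrm :: "'a \<Rightarrow> 'a"
    and \<nu> lam k :: real and s :: nat and A :: "nat \<Rightarrow> nat \<Rightarrow> real" and b :: "nat \<Rightarrow> real"
    and w0 w1 :: "'a \<Rightarrow> 'a" and g ut W :: "nat \<Rightarrow> 'a \<Rightarrow> 'a" and q :: "nat \<Rightarrow> 'a \<Rightarrow> real"
    and R :: "nat \<Rightarrow> real"
  assumes \<Omega>: "open \<Omega>" "bounded \<Omega>"
    and stable: "alg_stable s A b"
    and smooth_w: "smooth_up_to_bdry \<Omega> w0" "smooth_up_to_bdry \<Omega> w1"
    and smooth_stage: "\<And>i. i \<in> {1..s} \<Longrightarrow> smooth_up_to_bdry \<Omega> (g i) \<and> smooth_up_to_bdry \<Omega> (ut i)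
          \<and> smooth_up_to_bdry \<Omega> (W i) \<and> smooth_up_to_bdry \<Omega> (q i)"
    and q_eq: "\<And>i x. i \<in> {1..s} \<Longrightarrow> x \<in> \<Omega> \<Longrightarrow>
          slap (q i) x = vdiv (\<lambda>y. g i y - R i *\<^sub>R conv (ut i) y) x"
    and q_bc: "\<And>i x. i \<in> {1..s} \<Longrightarrow> x \<in> frontier \<Omega> \<Longrightarrow>
          nrm x \<bullet> sgrad (q i) x = nrm x \<bullet> (g i x - R i *\<^sub>R conv (ut i) x + \<nu> *\<^sub>R vlap (W i) x)
            + lam * (nrm x \<bullet> W i x)"
    and W_eq: "\<And>i x. i \<in> {1..s} \<Longrightarrow> x \<in> \<Omega> \<Longrightarrow>
          W i x = w0 x + k *\<^sub>R (\<Sum>j=1..s. A i j *\<^sub>R stage_rho \<nu> (g j) (R j) (ut j) (q j) (W j) x)"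
    and W_bc: "\<And>i x. i \<in> {1..s} \<Longrightarrow> x \<in> frontier \<Omega> \<Longrightarrow> vdiv (W i) x = 0"
    and w_step: "\<And>x. x \<in> \<Omega> \<Longrightarrow>
          w1 x = w0 x + k *\<^sub>R (\<Sum>i=1..s. b i *\<^sub>R stage_rho \<nu> (g i) (R i) (ut i) (q i) (W i) x)"
begin

definition \<rho> :: "nat \<Rightarrow> 'a \<Rightarrow> 'a" where
  "\<rho> i = stage_rho \<nu> (g i) (R i) (ut i) (q i) (W i)"

lemma
  assumes "i \<in> {1..s}" "x \<in> closure \<Omega>"
  shows stage_terms_differentiable:
      "(\<lambda>y. g i y - R i *\<^sub>R conv (ut i) y) differentiable (at x)"
      "sgrad (q i) differentiable (at x)" "vlap (W i) differentiable (at x)"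
    and \<rho>_differentiable: "\<rho> i differentiable (at x)"
proof -
  note smooth = smooth_stage[OF assms(1)]
  have "g i differentiable (at x)" "conv (ut i) differentiable (at x)"
    using smooth assms(2)
    by (auto intro: smooth_up_to_bdry_differentiable smooth_up_to_bdry_conv_differentiable)
  then show F: "(\<lambda>y. g i y - R i *\<^sub>R conv (ut i) y) differentiable (at x)"
    by (intro differentiable_diff differentiable_scaleR differentiable_const)
  show S: "sgrad (q i) differentiable (at x)" and H: "vlap (W i) differentiable (at x)"
    using smooth assms(2)
    by (auto intro: smooth_up_to_bdry_differentiable smooth_up_to_bdry_sgrad smooth_up_to_bdry_vlap)
  show "\<rho> i differentiable (at x)"
    unfolding \<rho>_def stage_rho_def
    by (rule differentiable_add[OF differentiable_diff[OF F S]
          differentiable_scaleR[OF differentiable_const H]])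
qed

lemma \<rho>_continuous_on: "i \<in> {1..s} \<Longrightarrow> continuous_on (closure \<Omega>) (\<rho> i)"
  using \<rho>_differentiable differentiable_imp_continuous_within continuous_at_imp_continuous_on by blast

lemma vdiv_\<rho>:
  assumes "i \<in> {1..s}" "x \<in> \<Omega>"
  shows "vdiv (\<rho> i) x = \<nu> * slap (vdiv (W i)) x"
proof -
  have x: "x \<in> closure \<Omega>" using assms(2) closure_subset by blast
  note F = stage_terms_differentiable(1)[OF assms(1) x]
    and S = stage_terms_differentiable(2)[OF assms(1) x]
    and H = stage_terms_differentiable(3)[OF assms(1) x]
  obtain Vq VW where "open Vq" "closure \<Omega> \<subseteq> Vq" "Cinf_on Vq (q i)"
    and "open VW" "closure \<Omega> \<subseteq> VW" "Cinf_on VW (W i)"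
    using smooth_stage[OF assms(1)] by (meson smooth_up_to_bdryE)
  then have "vdiv (sgrad (q i)) x = slap (q i) x" "vdiv (vlap (W i)) x = slap (vdiv (W i)) x"
    using x by (auto intro: vdiv_sgrad vdiv_vlap)
  then show ?thesis
    unfolding \<rho>_def stage_rho_def
    using F S H q_eq[OF assms] by (simp add: vdiv_add vdiv_diff vdiv_scaleR)
qed

lemma normal_component_estimate:
  assumes x: "x \<in> frontier \<Omega>"
  shows "(nrm x \<bullet> w1 x)\<^sup>2 - (nrm x \<bullet> w0 x)\<^sup>2 \<le> - 2 * k * lam * (\<Sum>i=1..s. b i * (nrm x \<bullet> W i x)\<^sup>2)"
proof -
  have "x \<in> closure \<Omega>" using x unfolding frontier_def by auto
  have cont_combination: "continuous_on (closure \<Omega>) (\<lambda>y. w0 y + k *\<^sub>R (\<Sum>j=1..s. c j *\<^sub>R \<rho> j y))" for c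
    using smooth_w(1) by (intro continuous_intros smooth_up_to_bdry_continuous_on \<rho>_continuous_on) auto
  have w1: "w1 x = w0 x + k *\<^sub>R (\<Sum>i=1..s. b i *\<^sub>R \<rho> i x)"
    by (rule continuous_on_closure_eq[OF smooth_up_to_bdry_continuous_on[OF smooth_w(2)]
          cont_combination _ \<open>x \<in> closure \<Omega>\<close>]) (simp add: w_step \<rho>_def)
  have W: "W i x = w0 x + k *\<^sub>R (\<Sum>j=1..s. A i j *\<^sub>R \<rho> j x)" if i: "i \<in> {1..s}" for i
    using smooth_stage[OF i]
    by (intro continuous_on_closure_eq[OF smooth_up_to_bdry_continuous_on cont_combination _
          \<open>x \<in> closure \<Omega>\<close>])
      (auto simp: W_eq[OF i] \<rho>_def)
  define Y where "Y i = nrm x \<bullet> W i x" for i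
  define F where "F i = - lam * Y i" for i
  have F: "nrm x \<bullet> \<rho> i x = F i" if "i \<in> {1..s}" for i
    using q_bc[OF that x] unfolding \<rho>_def stage_rho_def F_def Y_def
    by (simp add: algebra_simps)
  have "(nrm x \<bullet> w1 x)\<^sup>2 - (nrm x \<bullet> w0 x)\<^sup>2 \<le> 2 * k * (\<Sum>i=1..s. b i * Y i * F i)"
  proof (rule alg_stable_square_increment_le[OF stable])
    show "nrm x \<bullet> w1 x = nrm x \<bullet> w0 x + k * (\<Sum>i=1..s. b i * F i)"
      unfolding w1 using F by (simp add: inner_add_right inner_sum_right)
    show "Y i = nrm x \<bullet> w0 x + k * (\<Sum>j=1..s. A i j * F j)" if "i \<in> {1..s}" for i
      unfolding Y_def W[OF that] using F by (simp add: inner_add_right inner_sum_right)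
  qed
  also have "2 * k * (\<Sum>i=1..s. b i * Y i * F i) = - 2 * k * lam * (\<Sum>i=1..s. b i * (Y i)\<^sup>2)"
    unfolding F_def by (simp add: sum_distrib_left power2_eq_square algebra_simps)
  finally show ?thesis unfolding Y_def .
qed

lemma vdiv_square_increment_le:
  assumes "y \<in> \<Omega>"
  shows "(vdiv w1 y)\<^sup>2 - (vdiv w0 y)\<^sup>2
    \<le> 2 * k * \<nu> * (\<Sum>i=1..s. b i * (vdiv (W i) y * slap (vdiv (W i)) y))"
proof -
  have y: "y \<in> closure \<Omega>" using assms closure_subset by blast
  have combination: "vdiv (\<lambda>z. w0 z + k *\<^sub>R (\<Sum>j=1..s. c j *\<^sub>R \<rho> j z)) y
      = vdiv w0 y + k * (\<Sum>j=1..s. c j * (\<nu> * slap (vdiv (W j)) y))" for c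
  proof -
    have "vdiv (\<lambda>z. w0 z + k *\<^sub>R (\<Sum>j=1..s. c j *\<^sub>R \<rho> j z)) y
        = vdiv w0 y + k * (\<Sum>j=1..s. c j * vdiv (\<rho> j) y)"
      using smooth_up_to_bdry_differentiable[OF smooth_w(1) y] \<rho>_differentiable[OF _ y]
      by (intro vdiv_linear_combination) auto
    then show ?thesis using vdiv_\<rho>[OF _ assms] by simp
  qed
  have "(vdiv w1 y)\<^sup>2 - (vdiv w0 y)\<^sup>2
      \<le> 2 * k * (\<Sum>i=1..s. b i * vdiv (W i) y * (\<nu> * slap (vdiv (W i)) y))"
  proof (rule alg_stable_square_increment_le[OF stable])
    show "vdiv w1 y = vdiv w0 y + k * (\<Sum>i=1..s. b i * (\<nu> * slap (vdiv (W i)) y))"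
      using vdiv_cong_open[OF \<Omega>(1) assms w_step] combination by (simp add: \<rho>_def)
    show "vdiv (W i) y = vdiv w0 y + k * (\<Sum>j=1..s. A i j * (\<nu> * slap (vdiv (W j)) y))"
      if "i \<in> {1..s}" for i
      using vdiv_cong_open[OF \<Omega>(1) assms W_eq[OF that]] combination by (simp add: \<rho>_def)
  qed
  then show ?thesis by (simp add: sum_distrib_left algebra_simps)
qed

lemma divergence_estimate:
  assumes "0 \<le> k" "0 \<le> \<nu>"
  shows "L2sq \<Omega> (vdiv w1) - L2sq \<Omega> (vdiv w0)
    \<le> - 2 * k * \<nu> * (\<Sum>i=1..s. b i * L2sq \<Omega> (sgrad (vdiv (W i))))"
proof -
  define D where "D i = vdiv (W i)" for i
  have smooth_D: "smooth_up_to_bdry \<Omega> (D i)" if "i \<in> {1..s}" for i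
    unfolding D_def using smooth_stage[OF that] by (blast intro: smooth_up_to_bdry_vdiv)
  note int = integrable_on_bounded_open[OF \<Omega>] and cont = smooth_up_to_bdry_continuous_on
  have "L2sq \<Omega> (vdiv w1) - L2sq \<Omega> (vdiv w0) = integral \<Omega> (\<lambda>y. (vdiv w1 y)\<^sup>2 - (vdiv w0 y)\<^sup>2)"
    unfolding L2sq_def real_norm_def power2_abs using smooth_w
    by (intro integral_diff[symmetric] int continuous_intros cont smooth_up_to_bdry_vdiv) auto
  also have "\<dots> \<le> integral \<Omega> (\<lambda>y. 2 * k * \<nu> * (\<Sum>i=1..s. b i * (D i y * slap (D i) y)))"
    using vdiv_square_increment_le[unfolded D_def[symmetric]] smooth_w smooth_D
    by (intro integral_le int continuous_intros cont smooth_up_to_bdry_vdiv smooth_up_to_bdry_slap) auto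
  also have "\<dots> = 2 * k * \<nu> * (\<Sum>i=1..s. b i * integral \<Omega> (\<lambda>y. D i y * slap (D i) y))"
  proof -
    have "integral \<Omega> (\<lambda>y. \<Sum>i=1..s. b i * (D i y * slap (D i) y))
        = (\<Sum>i=1..s. integral \<Omega> (\<lambda>y. b i * (D i y * slap (D i) y)))"
      using integrable_times_slap[OF \<Omega> smooth_D] by (intro integral_sum integrable_on_mult_right) auto
    then show ?thesis by simp
  qed
  also have "\<dots> \<le> 2 * k * \<nu> * (\<Sum>i=1..s. b i * - L2sq \<Omega> (sgrad (D i)))"
    using integral_times_slap_le[OF \<Omega> smooth_D] W_bc stable assms unfolding alg_stable_def D_def
    by (intro mult_left_mono sum_mono) auto
  finally show ?thesis by (simp add: D_def sum_negf)
qed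

end

theorem theorem9:
  fixes \<Omega> :: "'a::euclidean_space set" and nrm :: "'a \<Rightarrow> 'a"
    and \<nu> lam k :: real and s :: nat and A :: "nat \<Rightarrow> nat \<Rightarrow> real" and b :: "nat \<Rightarrow> real"
    and w u :: "nat \<Rightarrow> 'a \<Rightarrow> 'a" and r :: "nat \<Rightarrow> real"
    and g ut W U :: "nat \<Rightarrow> nat \<Rightarrow> 'a \<Rightarrow> 'a"
    and q :: "nat \<Rightarrow> nat \<Rightarrow> 'a \<Rightarrow> real" and R :: "nat \<Rightarrow> nat \<Rightarrow> real"
  assumes dom: "smooth_domain \<Omega> nrm"
    and nu: "\<nu> > 0" and lam_nonneg: "lam \<ge> 0" and kpos: "k > 0"
    and stable: "alg_stable s A b"
    and smooth_step: "\<And>n. smooth_up_to_bdry \<Omega> (w n) \<and> smooth_up_to_bdry \<Omega> (u n)"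
    and smooth_stage: "\<And>n i. i \<in> {1..s} \<Longrightarrow>
          smooth_up_to_bdry \<Omega> (g n i) \<and> smooth_up_to_bdry \<Omega> (ut n i) \<and>
          smooth_up_to_bdry \<Omega> (W n i) \<and> smooth_up_to_bdry \<Omega> (U n i) \<and>
          smooth_up_to_bdry \<Omega> (q n i)"
    and q_eq: "\<And>n i x. i \<in> {1..s} \<Longrightarrow> x \<in> \<Omega> \<Longrightarrow>
          slap (q n i) x = vdiv (\<lambda>y. g n i y - R n i *\<^sub>R conv (ut n i) y) x"
    and q_bc: "\<And>n i x. i \<in> {1..s} \<Longrightarrow> x \<in> frontier \<Omega> \<Longrightarrow>
          nrm x \<bullet> sgrad (q n i) x =
            nrm x \<bullet> (g n i x - R n i *\<^sub>R conv (ut n i) x + \<nu> *\<^sub>R vlap (W n i) x)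
            + lam * (nrm x \<bullet> W n i x)"
    and W_eq: "\<And>n i x. i \<in> {1..s} \<Longrightarrow> x \<in> \<Omega> \<Longrightarrow>
          W n i x = w n x + k *\<^sub>R (\<Sum>j=1..s. A i j *\<^sub>R
                       stage_rho \<nu> (g n j) (R n j) (ut n j) (q n j) (W n j) x)"
    and W_bc: "\<And>n i x. i \<in> {1..s} \<Longrightarrow> x \<in> frontier \<Omega> \<Longrightarrow>
          (\<forall>\<tau>. norm \<tau> = 1 \<and> \<tau> \<bullet> nrm x = 0 \<longrightarrow> W n i x \<bullet> \<tau> = 0) \<and> vdiv (W n i) x = 0"
    and R_eq: "\<And>n i. i \<in> {1..s} \<Longrightarrow>
          R n i = r n + k * (\<Sum>j=1..s. A i j * Icv \<Omega> (ut n j) (U n j))"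
    and U_eq: "\<And>n i. i \<in> {1..s} \<Longrightarrow>
          leray_proj \<Omega> nrm (W n i) (U n i) \<and> (\<forall>x\<in>frontier \<Omega>. nrm x \<bullet> U n i x = 0)"
    and w_step: "\<And>n x. x \<in> \<Omega> \<Longrightarrow>
          w (Suc n) x = w n x + k *\<^sub>R (\<Sum>i=1..s. b i *\<^sub>R
                          stage_rho \<nu> (g n i) (R n i) (ut n i) (q n i) (W n i) x)"
    and r_step: "\<And>n. r (Suc n) = r n + k * (\<Sum>i=1..s. b i * Icv \<Omega> (ut n i) (U n i))"
    and u_step: "\<And>n. leray_proj \<Omega> nrm (w (Suc n)) (u (Suc n)) \<and>
          (\<forall>x\<in>frontier \<Omega>. nrm x \<bullet> u (Suc n) x = 0)"
    and u0: "leray_proj \<Omega> nrm (w 0) (u 0)"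
    and init: "\<And>x. x \<in> frontier \<Omega> \<Longrightarrow> w 0 x = u 0 x"
  shows "(\<forall>n. L2sq \<Omega> (vdiv (w (Suc n))) - L2sq \<Omega> (vdiv (w n))
              \<le> - 2 * k * \<nu> * (\<Sum>i=1..s. b i * L2sq \<Omega> (sgrad (vdiv (W n i)))))
       \<and> (\<forall>n. \<forall>x\<in>frontier \<Omega>. (nrm x \<bullet> w (Suc n) x)\<^sup>2 - (nrm x \<bullet> w n x)\<^sup>2
              \<le> - 2 * k * lam * (\<Sum>i=1..s. b i * (nrm x \<bullet> W n i x)\<^sup>2))"
proof -
  have \<Omega>: "open \<Omega>" "bounded \<Omega>" using dom unfolding smooth_domain_def by auto
  have step: "gepup_step \<Omega> nrm \<nu> lam k s A b (w n) (w (Suc n)) (g n) (ut n) (W n) (q n) (R n)" for n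
    using \<Omega> stable smooth_step smooth_stage q_eq q_bc W_eq W_bc w_step by unfold_locales auto
  show ?thesis
    using gepup_step.divergence_estimate[OF step] gepup_step.normal_component_estimate[OF step] kpos nu
    by auto
qed

end
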